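(* Let $L=\partial_x+\sum_{i\ge1}u_{i+1}\partial_x^{-i}$ be a scalar pseudo-differential operator in $\partial_x$ satisfying $L^*=-\partial_xL\partial_x^{-1}$. Then there exists $W=1+\sum_{j\ge1}w_j\partial_x^{-j}$ such that $L=W\partial_xW^{-1}$ and $W\partial_x^{-1}W^*=\partial_x^{-1}$.
   Context: Coefficients $u_i,w_j$ are functions of $x$ (possibly depending on further parameters), $\partial_x=\partial/\partial x$, pseudo-differential operators compose by the generalized Leibniz rule, and $(\sum_ib_i\partial_x^i)^*=\sum_i(-\partial_x)^ib_i$. Indefinite integration $\partial_x^{-1}$ of functions is allowed (the $w_j$ are obtained by integration in $x$). *)

theory Defs
  imports "HOL-Analysis.Analysis"
begin

text \<open>An operator \<open>\<Sum>\<^sub>i P i \<partial>\<^sub>x\<^sup>i\<close> (i ranging over the integers, only finitely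
many nonzero coefficients with positive index, i.e. the support is bounded above)
is represented by its coefficient map \<open>P :: int \<Rightarrow> real \<Rightarrow> real\<close>.\<close>

type_synonym psdo = "int \<Rightarrow> real \<Rightarrow> real"

definition smooth :: "(real \<Rightarrow> real) \<Rightarrow> bool" where
  "smooth f \<longleftrightarrow> (\<forall>k x. ((deriv ^^ k) f) differentiable (at x))"

definition is_psdo :: "psdo \<Rightarrow> bool" where
  "is_psdo P \<longleftrightarrow> (\<exists>N. \<forall>i>N. P i = (\<lambda>_. 0)) \<and> (\<forall>i. smooth (P i))"

definition dpow :: "int \<Rightarrow> psdo" where
  "dpow m = (\<lambda>i. if i = m then (\<lambda>_. 1) else (\<lambda>_. 0))"

text \<open>Composition by the generalized Leibniz rule
  \<open>(a \<partial>\<^sup>i)(b \<partial>\<^sup>j) = \<Sum>\<^sub>k\<^sub>\<ge>\<^sub>0 (i choose k) a b\<^sup>(\<^sup>k\<^sup>) \<partial>\<^sup>i\<^sup>+\<^sup>j\<^sup>-\<^sup>k\<close>;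
  for operators with support bounded above the index set is finite.\<close>
definition psdo_mult :: "psdo \<Rightarrow> psdo \<Rightarrow> psdo" where
  "psdo_mult P Q = (\<lambda>n x. \<Sum>(i, k) \<in> {(i, k). P i \<noteq> (\<lambda>_. 0) \<and> Q (n + int k - i) \<noteq> (\<lambda>_. 0)}.
       (of_int i gchoose k) * P i x * (deriv ^^ k) (Q (n + int k - i)) x)"

text \<open>Formal adjoint \<open>(\<Sum>\<^sub>i b\<^sub>i \<partial>\<^sup>i)\<^sup>* = \<Sum>\<^sub>i (-\<partial>)\<^sup>i b\<^sub>i\<close>, written out with the Leibniz rule:
  \<open>(-\<partial>)\<^sup>i b = (-1)\<^sup>i \<Sum>\<^sub>k (i choose k) b\<^sup>(\<^sup>k\<^sup>) \<partial>\<^sup>i\<^sup>-\<^sup>k\<close>.\<close>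
definition psdo_adj :: "psdo \<Rightarrow> psdo" where
  "psdo_adj P = (\<lambda>n x. \<Sum>k \<in> {k. P (n + int k) \<noteq> (\<lambda>_. 0)}.
       ((-1) powi (n + int k)) * (of_int (n + int k) gchoose k) * (deriv ^^ k) (P (n + int k)) x)"

definition lax_op :: "(nat \<Rightarrow> real \<Rightarrow> real) \<Rightarrow> psdo" where
  "lax_op u = (\<lambda>n. if n = 1 then (\<lambda>_. 1) else if n \<le> -1 then u (nat (1 - n)) else (\<lambda>_. 0))"

end

theory Submission
  imports Defs "HOL-Computational_Algebra.Formal_Power_Series" "HOL-Library.Groups_Big_Fun"
begin

text \<open>
  Solving \<open>L W\<^sub>0 = W\<^sub>0 \<partial>\<close> coefficient by coefficient gives a dressing operator
  \<open>W\<^sub>0 = 1 + \<Sum>\<^sub>j w\<^sub>j \<partial>\<^sup>-\<^sup>j\<close>: the coefficient of \<open>\<partial>\<^sup>-\<^sup>m\<close> determines \<open>w\<^sub>m'\<close> from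
  \<open>w\<^sub>1, \<dots>, w\<^sub>m\<^sub>-\<^sub>1\<close>, so each \<open>w\<^sub>m\<close> is an antiderivative. The constraint \<open>L\<^sup>* = -\<partial> L \<partial>\<^sup>-\<^sup>1\<close>
  says exactly that \<open>B = W\<^sub>0\<^sup>* \<partial> W\<^sub>0\<close> commutes with \<open>\<partial>\<close>, so \<open>B\<close> has constant coefficients;
  since \<open>B\<^sup>* = -B\<close> and \<open>B = \<partial> + (lower order)\<close>, only odd powers of \<open>\<partial>\<close> occur in \<open>B\<close>.
  Such a \<open>B\<close> factors as \<open>C\<^sup>* \<partial> C\<close> with \<open>C = 1 + \<Sum>\<^sub>j c\<^sub>j \<partial>\<^sup>-\<^sup>j\<close> constant (the \<open>c\<^sub>j\<close> are found
  one at a time), and \<open>W = W\<^sub>0 C\<^sup>-\<^sup>1\<close> still satisfies \<open>L = W \<partial> W\<^sup>-\<^sup>1\<close> while \<open>W\<^sup>* \<partial> W = \<partial>\<close>,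
  which is equivalent to \<open>W \<partial>\<^sup>-\<^sup>1 W\<^sup>* = \<partial>\<^sup>-\<^sup>1\<close>.

  The ring laws for the coefficientwise composition and adjoint (associativity,
  \<open>(P Q)\<^sup>* = Q\<^sup>* P\<^sup>*\<close>, \<open>P\<^sup>*\<^sup>* = P\<close>) are proved by expanding both sides into finitely supported
  sums, reindexing them to a common index set and comparing binomial coefficients.
\<close>

notation psdo_mult (infixl "\<odot>" 70)

section \<open>Smooth functions\<close>

lemma leibniz_binomial_step:
  fixes a b :: "nat \<Rightarrow> real"
  shows "(\<Sum>i\<le>k. of_nat (k choose i) * (a (Suc i) * b (k - i) + a i * b (Suc (k - i))))
       = (\<Sum>i\<le>Suc k. of_nat (Suc k choose i) * (a i * b (Suc k - i)))"
proof -
  have shift: "(\<Sum>i\<le>Suc k. of_nat (k choose i) * (a i * b (Suc k - i)))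
       = a 0 * b (Suc k) + (\<Sum>i\<le>k. of_nat (k choose Suc i) * (a (Suc i) * b (k - i)))"
    by (subst sum.atMost_Suc_shift) simp
  have "(\<Sum>i\<le>Suc k. of_nat (Suc k choose i) * (a i * b (Suc k - i)))
      = a 0 * b (Suc k) + (\<Sum>i\<le>k. of_nat (k choose i) * (a (Suc i) * b (k - i)))
         + (\<Sum>i\<le>k. of_nat (k choose Suc i) * (a (Suc i) * b (k - i)))"
    by (subst sum.atMost_Suc_shift) (simp add: sum.distrib algebra_simps)
  also have "\<dots> = (\<Sum>i\<le>k. of_nat (k choose i) * (a (Suc i) * b (k - i)))
         + (\<Sum>i\<le>k. of_nat (k choose i) * (a i * b (Suc (k - i))))"
    using shift by (simp add: Suc_diff_le binomial_eq_0)
  finally show ?thesis by (simp add: sum.distrib algebra_simps)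
qed

lemma deriv_eqI: "(\<And>x. ((h::real\<Rightarrow>real) has_real_derivative h' x) (at x)) \<Longrightarrow> deriv h = h'"
  by (rule ext) (rule DERIV_imp_deriv)

lemma
  fixes g :: "nat \<Rightarrow> real \<Rightarrow> real"
  assumes "\<And>k x. (g k has_real_derivative g (Suc k) x) (at x)"
  shows smooth_derivative_sequence: "smooth (g 0)"
    and deriv_iter_derivative_sequence: "(deriv^^k) (g 0) = g k"
proof -
  have e: "(deriv^^k) (g 0) = g k" for k
    by (induction k) (auto intro!: deriv_eqI assms)
  then show "(deriv^^k) (g 0) = g k" .
  show "smooth (g 0)" unfolding smooth_def e
    using assms real_differentiable_def by blast
qed

lemma smooth_has_real_derivative:
  "smooth f \<Longrightarrow> ((deriv^^k) f has_real_derivative deriv ((deriv^^k) f) x) (at x)"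
  unfolding smooth_def by (simp add: DERIV_deriv_iff_real_differentiable)

lemma smooth_deriv_iter: "smooth f \<Longrightarrow> smooth ((deriv^^k) f)"
  unfolding smooth_def by (metis funpow_add comp_apply)

lemma deriv_iter_zero [simp]: "(deriv^^k) (\<lambda>_. 0::real) = (\<lambda>_. 0)"
  by (induction k) (auto intro!: deriv_eqI)

lemma deriv_iter_const [simp]: "(deriv^^Suc k) (\<lambda>_. c::real) = (\<lambda>_. 0)"
proof -
  have "deriv (\<lambda>_. c::real) = (\<lambda>_. 0)" by (auto intro!: deriv_eqI)
  then show ?thesis by (simp only: funpow_Suc_right comp_apply deriv_iter_zero)
qed

lemma smooth_const [simp]: "smooth (\<lambda>_. c)"
  using smooth_derivative_sequence[of "\<lambda>k. if k = 0 then (\<lambda>_. c) else (\<lambda>_. 0)"] by auto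

lemma
  assumes "smooth f"
  shows smooth_cmult: "smooth (\<lambda>x. c * f x)"
    and deriv_iter_cmult: "(deriv^^k) (\<lambda>x. c * f x) = (\<lambda>x. c * (deriv^^k) f x)"
proof -
  let ?G = "\<lambda>k x. c * (deriv^^k) f x"
  have "(?G k has_real_derivative ?G (Suc k) x) (at x)" for k x
    using smooth_has_real_derivative[OF assms] by (auto intro!: DERIV_cmult)
  then show "smooth (\<lambda>x. c * f x)" "(deriv^^k) (\<lambda>x. c * f x) = ?G k"
    using smooth_derivative_sequence[of ?G] deriv_iter_derivative_sequence[of ?G] by auto
qed

lemma
  assumes "smooth f"
  shows smooth_minus: "smooth (\<lambda>x. - f x)"
    and deriv_iter_minus: "(deriv^^k) (\<lambda>x. - f x) = (\<lambda>x. - (deriv^^k) f x)"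
  using smooth_cmult[OF assms, where c="-1"] deriv_iter_cmult[OF assms, where c="-1"] by auto

lemma
  assumes "\<And>i. i \<in> S \<Longrightarrow> smooth (F i)"
  shows smooth_sum: "smooth (\<lambda>x. \<Sum>i\<in>S. F i x)"
    and deriv_iter_sum: "(deriv^^k) (\<lambda>x. \<Sum>i\<in>S. F i x) = (\<lambda>x. \<Sum>i\<in>S. (deriv^^k) (F i) x)"
proof -
  let ?G = "\<lambda>k x. \<Sum>i\<in>S. (deriv^^k) (F i) x"
  have "(?G k has_real_derivative ?G (Suc k) x) (at x)" for k x
    using smooth_has_real_derivative[OF assms] by (auto intro!: derivative_intros)
  then show "smooth (\<lambda>x. \<Sum>i\<in>S. F i x)" "(deriv^^k) (\<lambda>x. \<Sum>i\<in>S. F i x) = ?G k"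
    using smooth_derivative_sequence[of ?G] deriv_iter_derivative_sequence[of ?G] by auto
qed

lemma
  assumes f: "smooth f" and g: "smooth g"
  shows smooth_mult: "smooth (\<lambda>x. f x * g x)"
    and deriv_iter_mult: "(deriv^^k) (\<lambda>x. f x * g x)
          = (\<lambda>x. \<Sum>i\<le>k. of_nat (k choose i) * ((deriv^^i) f x * (deriv^^(k-i)) g x))"
proof -
  let ?G = "\<lambda>k x. \<Sum>i\<le>k. of_nat (k choose i) * ((deriv^^i) f x * (deriv^^(k-i)) g x)"
  have "(?G k has_real_derivative ?G (Suc k) x) (at x)" for k x
  proof -
    have "(?G k has_real_derivative (\<Sum>i\<le>k. of_nat (k choose i) *
             ((deriv^^Suc i) f x * (deriv^^(k-i)) g x + (deriv^^i) f x * (deriv^^Suc (k-i)) g x))) (at x)"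
      using smooth_has_real_derivative[OF f] smooth_has_real_derivative[OF g]
      by (intro derivative_eq_intros) (auto simp: algebra_simps)
    then show ?thesis
      using leibniz_binomial_step[of k "\<lambda>i. (deriv^^i) f x" "\<lambda>i. (deriv^^i) g x"] by simp
  qed
  then show "smooth (\<lambda>x. f x * g x)" "(deriv^^k) (\<lambda>x. f x * g x) = ?G k"
    using smooth_derivative_sequence[of ?G] deriv_iter_derivative_sequence[of ?G] by auto
qed

definition antideriv :: "(real \<Rightarrow> real) \<Rightarrow> real \<Rightarrow> real" where
  "antideriv f = (SOME F. \<forall>x. (F has_real_derivative f x) (at x))"

lemma
  assumes "smooth f"
  shows deriv_antideriv: "deriv (antideriv f) = f"
    and smooth_antideriv: "smooth (antideriv f)"
proof -
  have "isCont f x" for x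
    using assms differentiable_imp_continuous_within[of f x UNIV] unfolding smooth_def
    by (metis funpow_0)
  then obtain F where "\<forall>x. (F has_vector_derivative f x) (at x)"
    using einterval_antiderivative[of "-\<infinity>" "\<infinity>" f] by auto
  then have "\<exists>F. \<forall>x. (F has_real_derivative f x) (at x)"
    by (auto simp: has_real_derivative_iff_has_vector_derivative)
  then have d: "\<forall>x. (antideriv f has_real_derivative f x) (at x)"
    unfolding antideriv_def by (rule someI_ex)
  then show e: "deriv (antideriv f) = f" by (intro deriv_eqI) auto
  have "(deriv ^^ Suc k) (antideriv f) = (deriv^^k) f" for k
    by (simp only: funpow_Suc_right comp_apply e)
  then show "smooth (antideriv f)"
    using d assms real_differentiable_def unfolding smooth_def by (metis not0_implies_Suc funpow_0)
qed

lemma smooth_deriv_eq_0_imp_const: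
  assumes "smooth f" "deriv f = (\<lambda>_. 0)"
  shows "f = (\<lambda>_. f 0)"
  using smooth_has_real_derivative[OF assms(1), of 0] assms(2) DERIV_isconst_all by fastforce

section \<open>Finitely supported sums\<close>

lemma Sum_any_reindex_inj:
  assumes "inj l" "\<And>a. g a \<noteq> 0 \<Longrightarrow> a \<in> range l"
  shows "Sum_any g = Sum_any (g \<circ> l)"
proof -
  have e: "{a. g a \<noteq> 0} = l ` {b. g (l b) \<noteq> 0}" using assms(2) by auto
  have "sum g (l ` {b. g (l b) \<noteq> 0}) = sum (g \<circ> l) {b. g (l b) \<noteq> 0}"
    by (rule sum.reindex) (use assms(1) inj_on_subset in blast)
  then show ?thesis unfolding Sum_any.expand_set e by simp
qed

lemma Sum_any_Sum_any:
  assumes "finite {(a, b). g a b \<noteq> 0}"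
  shows "Sum_any (\<lambda>a. Sum_any (g a)) = Sum_any (\<lambda>(a, b). g a b)"
proof (rule Sum_any.cartesian_product)
  let ?S = "{(a, b). g a b \<noteq> 0}"
  show "finite (fst ` ?S \<times> snd ` ?S)" using assms by simp
  show "{a. \<exists>b. g a b \<noteq> 0} \<times> {b. \<exists>a. g a b \<noteq> 0} \<subseteq> fst ` ?S \<times> snd ` ?S"
    by (auto simp: image_iff)
qed

lemma Sum_any_Sum_any_reindex:
  assumes "inj l" "\<And>a b. g a b \<noteq> 0 \<Longrightarrow> (a, b) \<in> range l"
    and "finite {z. ((\<lambda>(a, b). g a b) \<circ> l) z \<noteq> 0}"
  shows "Sum_any (\<lambda>a. Sum_any (g a)) = Sum_any ((\<lambda>(a, b). g a b) \<circ> l)"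
proof -
  let ?h = "(\<lambda>(a, b). g a b) \<circ> l"
  have "{(a, b). g a b \<noteq> 0} \<subseteq> l ` {z. ?h z \<noteq> 0}"
  proof clarify
    fix a b assume "g a b \<noteq> 0"
    moreover from this obtain z where "(a, b) = l z" using assms(2) by blast
    ultimately show "(a, b) \<in> l ` {z. ?h z \<noteq> 0}"
      by (metis (mono_tags) comp_apply case_prod_conv image_eqI mem_Collect_eq)
  qed
  then have "finite {(a, b). g a b \<noteq> 0}"
    using assms(3) finite_surj by blast
  then have "Sum_any (\<lambda>a. Sum_any (g a)) = Sum_any (\<lambda>(a, b). g a b)" by (rule Sum_any_Sum_any)
  also have "\<dots> = Sum_any ?h"
    using assms(1,2) by (intro Sum_any_reindex_inj) auto
  finally show ?thesis .
qed

lemma Sum_any_mult_Sum_any: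
  fixes f g :: "'a \<Rightarrow> 'b::semiring_0"
  assumes "finite {a. f a \<noteq> 0}" "finite {b. g b \<noteq> 0}"
  shows "Sum_any f * Sum_any g = Sum_any (\<lambda>(a, b). f a * g b)"
proof -
  have "{(a, b). f a * g b \<noteq> 0} \<subseteq> {a. f a \<noteq> 0} \<times> {b. g b \<noteq> 0}" by auto
  then have "finite {(a, b). f a * g b \<noteq> 0}" using assms by (auto intro: finite_subset)
  then show ?thesis unfolding Sum_any_product[OF assms] by (rule Sum_any_Sum_any)
qed

lemma finite_antidiagonal_preimage:
  fixes S :: "('a \<times> nat) set"
  assumes "finite S"
  shows "finite {(z, t, m). (z, t + m) \<in> S}"
proof (rule finite_subset)
  show "{(z, t, m). (z, t + m) \<in> S} \<subseteq> (\<lambda>((z, r), t). (z, t, r - t)) ` (S \<times> {..Max (snd ` S)})"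
  proof clarify
    fix z t m assume "(z, t + m) \<in> S"
    moreover from this have "t + m \<le> Max (snd ` S)" using assms by (force intro: Max_ge)
    ultimately show "(z, t, m) \<in> (\<lambda>((z, r), t). (z, t, r - t)) ` (S \<times> {..Max (snd ` S)})"
      by (intro image_eqI[of _ _ "((z, t + m), t)"]) auto
  qed
qed (use assms in auto)

lemma Sum_any_antidiagonal:
  fixes g :: "'a \<Rightarrow> nat \<Rightarrow> nat \<Rightarrow> 'b::comm_monoid_add"
  assumes "finite S" "\<And>z t m. g z t m \<noteq> 0 \<Longrightarrow> (z, t + m) \<in> S"
  shows "Sum_any (\<lambda>(z, r). \<Sum>t\<le>r. g z t (r - t)) = Sum_any (\<lambda>(z, t, m). g z t m)"
proof -
  define l where "l = (\<lambda>(z::'a, t::nat, m::nat). ((z, t + m), t))"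
  define G where "G = (\<lambda>(z, r) t. if t \<le> r then g z t (r - t) else 0)"
  have "Sum_any (\<lambda>(z, r). \<Sum>t\<le>r. g z t (r - t)) = Sum_any (\<lambda>zr. Sum_any (G zr))"
    by (intro Sum_any.cong) (auto simp: G_def Sum_any.conditionalize atMost_iff)
  also have "\<dots> = Sum_any ((\<lambda>(zr, t). G zr t) \<circ> l)"
  proof (rule Sum_any_Sum_any_reindex)
    show "inj l" by (auto simp: l_def intro!: injI)
    show "(zr, t) \<in> range l" if "G zr t \<noteq> 0" for zr t
    proof (cases zr)
      case (Pair z r)
      then have "(zr, t) = l (z, t, r - t)" using that by (auto simp: G_def l_def split: if_splits)
      then show ?thesis by blast
    qed
    have "{w. ((\<lambda>(zr, t). G zr t) \<circ> l) w \<noteq> 0} \<subseteq> {(z, t, m). (z, t + m) \<in> S}"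
      using assms(2) by (auto simp: G_def l_def)
    then show "finite {w. ((\<lambda>(zr, t). G zr t) \<circ> l) w \<noteq> 0}"
      using finite_antidiagonal_preimage[OF assms(1)] by (rule finite_subset)
  qed
  also have "(\<lambda>(zr, t). G zr t) \<circ> l = (\<lambda>(z, t, m). g z t m)"
    by (auto simp: G_def l_def)
  finally show ?thesis .
qed

lemma Sum_any_Sum_any_reindex_antidiagonal:
  fixes G :: "'a \<Rightarrow> 'b \<Rightarrow> 'c::comm_monoid_add" and g :: "'d \<Rightarrow> nat \<Rightarrow> nat \<Rightarrow> 'c"
  assumes "inj l" "\<And>a b. G a b \<noteq> 0 \<Longrightarrow> (a, b) \<in> range l"
    and "(\<lambda>(a, b). G a b) \<circ> l = (\<lambda>(z, t, m). g z t m)"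
    and "finite S" "\<And>z t m. g z t m \<noteq> 0 \<Longrightarrow> (z, t + m) \<in> S"
  shows "Sum_any (\<lambda>a. Sum_any (G a)) = Sum_any (\<lambda>(z, r). \<Sum>t\<le>r. g z t (r - t))"
proof -
  have "{w. (\<lambda>(z, t, m). g z t m) w \<noteq> 0} \<subseteq> {(z, t, m). (z, t + m) \<in> S}"
    using assms(5) by auto
  then have "finite {w. ((\<lambda>(a, b). G a b) \<circ> l) w \<noteq> 0}"
    unfolding assms(3) using finite_antidiagonal_preimage[OF assms(4)] by (rule finite_subset)
  with assms(1,2) have "Sum_any (\<lambda>a. Sum_any (G a)) = Sum_any ((\<lambda>(a, b). G a b) \<circ> l)"
    by (rule Sum_any_Sum_any_reindex)
  also have "\<dots> = Sum_any (\<lambda>(z, r). \<Sum>t\<le>r. g z t (r - t))"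
    unfolding assms(3)
    by (rule Sum_any_antidiagonal[OF assms(4,5), symmetric])
  finally show ?thesis .
qed

lemma Sum_any_antidiagonal_nat:
  fixes g :: "nat \<Rightarrow> nat \<Rightarrow> 'b::comm_monoid_add"
  assumes "finite S" "\<And>t m. g t m \<noteq> 0 \<Longrightarrow> t + m \<in> S"
  shows "Sum_any (\<lambda>r. \<Sum>t\<le>r. g t (r - t)) = Sum_any (\<lambda>(t, m). g t m)"
proof -
  have bij: "bij (snd :: unit \<times> 'a \<Rightarrow> 'a)"
    by (auto simp: bij_def inj_def image_iff)
  have "Sum_any (\<lambda>r. \<Sum>t\<le>r. g t (r - t)) = Sum_any (\<lambda>(z::unit, r). \<Sum>t\<le>r. g t (r - t))"
    by (rule Sum_any.reindex_cong[OF bij]) auto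
  also have "\<dots> = Sum_any (\<lambda>(z::unit, t, m). g t m)"
    using Sum_any_antidiagonal[of "{()} \<times> S" "\<lambda>_. g"] assms by auto
  also have "\<dots> = Sum_any (\<lambda>(t, m). g t m)"
    by (rule Sum_any.reindex_cong[OF bij, symmetric]) auto
  finally show ?thesis .
qed

section \<open>Coefficients of products and adjoints\<close>

definition ord_le :: "psdo \<Rightarrow> int \<Rightarrow> bool" where
  "ord_le P N \<longleftrightarrow> (\<forall>i>N. P i = (\<lambda>_. 0))"

definition smooth_coeffs :: "psdo \<Rightarrow> bool" where
  "smooth_coeffs P \<longleftrightarrow> (\<forall>i. smooth (P i))"

lemma is_psdo_iff: "is_psdo P \<longleftrightarrow> (\<exists>N. ord_le P N) \<and> smooth_coeffs P"
  unfolding is_psdo_def ord_le_def smooth_coeffs_def by auto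

lemma ord_le_mono: "ord_le P N \<Longrightarrow> N \<le> M \<Longrightarrow> ord_le P M"
  unfolding ord_le_def by auto

lemma ord_le_vanishes: "ord_le P N \<Longrightarrow> N < i \<Longrightarrow> P i x = 0"
  unfolding ord_le_def by simp

lemma ord_le_deriv_iter_nonzero: "ord_le P N \<Longrightarrow> (deriv^^k) (P i) x \<noteq> 0 \<Longrightarrow> i \<le> N"
  unfolding ord_le_def by (metis deriv_iter_zero not_le)

lemma ord_le_nonzero: "ord_le P N \<Longrightarrow> P i x \<noteq> 0 \<Longrightarrow> i \<le> N"
  using ord_le_deriv_iter_nonzero[of P N 0] by simp

abbreviation binom :: "int \<Rightarrow> nat \<Rightarrow> real" where
  "binom i k \<equiv> of_int i gchoose k"

abbreviation alt_sign :: "int \<Rightarrow> real" where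
  "alt_sign m \<equiv> (-1) powi m"

definition mult_terms :: "psdo \<Rightarrow> psdo \<Rightarrow> int \<Rightarrow> real \<Rightarrow> int \<times> nat \<Rightarrow> real" where
  "mult_terms P Q n x = (\<lambda>(i, k). binom i k * (P i x * (deriv^^k) (Q (n + int k - i)) x))"

lemma mult_terms_support:
  assumes "ord_le P NP" "ord_le Q NQ" "mult_terms P Q n x (i, k) \<noteq> 0"
  shows "(i, k) \<in> {n - NQ..NP} \<times> {..nat (NP + NQ - n)}"
proof -
  have "i \<le> NP" "n + int k - i \<le> NQ"
    using assms ord_le_nonzero ord_le_deriv_iter_nonzero by (fastforce simp: mult_terms_def)+
  then show ?thesis by auto
qed

lemma finite_mult_terms:
  "ord_le P NP \<Longrightarrow> ord_le Q NQ \<Longrightarrow> finite {z. mult_terms P Q n x z \<noteq> 0}"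
  by (rule finite_subset[of _ "{n - NQ..NP} \<times> {..nat (NP + NQ - n)}"])
    (auto dest: mult_terms_support)

lemma psdo_mult_eq_sum:
  assumes "ord_le P NP" "ord_le Q NQ"
  shows "(P \<odot> Q) n x = (\<Sum>z \<in> {n - NQ..NP} \<times> {..nat (NP + NQ - n)}. mult_terms P Q n x z)"
proof -
  let ?S = "{(i, k). P i \<noteq> (\<lambda>_. 0) \<and> Q (n + int k - i) \<noteq> (\<lambda>_. 0)}"
  have "(i, k) \<in> {n - NQ..NP} \<times> {..nat (NP + NQ - n)}"
    if "P i \<noteq> (\<lambda>_. 0)" "Q (n + int k - i) \<noteq> (\<lambda>_. 0)" for i k
  proof -
    have "i \<le> NP" "n + int k - i \<le> NQ"
      using that assms unfolding ord_le_def by (meson not_le)+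
    then show ?thesis by auto
  qed
  then have sub: "?S \<subseteq> {n - NQ..NP} \<times> {..nat (NP + NQ - n)}" by auto
  have "(P \<odot> Q) n x = sum (mult_terms P Q n x) ?S"
    unfolding psdo_mult_def mult_terms_def by (intro sum.cong) (auto simp: algebra_simps)
  also have "\<dots> = sum (mult_terms P Q n x) ({n - NQ..NP} \<times> {..nat (NP + NQ - n)})"
    using sub by (intro sum.mono_neutral_left) (auto simp: mult_terms_def)
  finally show ?thesis .
qed

lemma psdo_mult_eq_Sum_any:
  assumes "ord_le P NP" "ord_le Q NQ"
  shows "(P \<odot> Q) n x = Sum_any (mult_terms P Q n x)"
proof -
  have "Sum_any (mult_terms P Q n x) = sum (mult_terms P Q n x) ({n - NQ..NP} \<times> {..nat (NP + NQ - n)})"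
    by (rule Sum_any.expand_superset) (auto dest: mult_terms_support[OF assms])
  then show ?thesis using psdo_mult_eq_sum[OF assms] by simp
qed

lemma ord_le_mult:
  assumes "ord_le P NP" "ord_le Q NQ"
  shows "ord_le (P \<odot> Q) (NP + NQ)"
  unfolding ord_le_def
proof (intro allI impI ext)
  fix n x assume "NP + NQ < n"
  then have "{n - NQ..NP} \<times> {..nat (NP + NQ - n)} = {}" by auto
  then show "(P \<odot> Q) n x = 0" by (simp add: psdo_mult_eq_sum[OF assms])
qed

lemma deriv_iter_deriv_iter: "(deriv^^j) ((deriv^^k) f) = (deriv^^(j + k)) f"
  by (simp add: funpow_add)

lemma
  assumes "smooth_coeffs P" "smooth_coeffs Q"
  shows smooth_mult_terms: "smooth (\<lambda>x. mult_terms P Q n x (j, m))"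
    and deriv_iter_mult_terms: "(deriv^^p) (\<lambda>x. mult_terms P Q n x (j, m)) x
      = binom j m * (\<Sum>q\<le>p. of_nat (p choose q) *
          ((deriv^^q) (P j) x * (deriv^^(p - q + m)) (Q (n + int m - j)) x))"
proof -
  have s: "smooth (P j)" "smooth ((deriv^^m) (Q (n + int m - j)))"
    using assms smooth_deriv_iter unfolding smooth_coeffs_def by auto
  have e: "(\<lambda>x. mult_terms P Q n x (j, m))
      = (\<lambda>x. binom j m * (P j x * (deriv^^m) (Q (n + int m - j)) x))"
    by (simp add: mult_terms_def)
  show "smooth (\<lambda>x. mult_terms P Q n x (j, m))"
    unfolding e by (intro smooth_cmult smooth_mult s)
  show "(deriv^^p) (\<lambda>x. mult_terms P Q n x (j, m)) x = binom j m * (\<Sum>q\<le>p. of_nat (p choose q) *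
          ((deriv^^q) (P j) x * (deriv^^(p - q + m)) (Q (n + int m - j)) x))"
    unfolding e deriv_iter_cmult[OF smooth_mult[OF s]] deriv_iter_mult[OF s] deriv_iter_deriv_iter
    by (rule refl)
qed

lemma smooth_coeffs_mult:
  assumes "ord_le P NP" "ord_le Q NQ" "smooth_coeffs P" "smooth_coeffs Q"
  shows "smooth_coeffs (P \<odot> Q)"
  unfolding smooth_coeffs_def psdo_mult_eq_sum[OF assms(1,2)]
  using smooth_mult_terms[OF assms(3,4)] by (auto intro!: smooth_sum)

definition deriv_mult_terms ::
    "psdo \<Rightarrow> psdo \<Rightarrow> int \<Rightarrow> nat \<Rightarrow> real \<Rightarrow> (int \<times> nat) \<times> nat \<Rightarrow> real" where
  "deriv_mult_terms P Q n p x = (\<lambda>((j, m), q). if q \<le> p then binom j m * of_nat (p choose q) *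
      ((deriv^^q) (P j) x * (deriv^^(p - q + m)) (Q (n + int m - j)) x) else 0)"

lemma deriv_mult_terms_support:
  assumes "ord_le P NP" "ord_le Q NQ" "deriv_mult_terms P Q n p x ((j, m), q) \<noteq> 0"
  shows "((j, m), q) \<in> ({n - NQ..NP} \<times> {..nat (NP + NQ - n)}) \<times> {..p}"
proof -
  have "q \<le> p" "j \<le> NP" "n + int m - j \<le> NQ"
    using assms ord_le_deriv_iter_nonzero
    by (fastforce simp: deriv_mult_terms_def split: if_splits)+
  then show ?thesis by auto
qed

lemma finite_deriv_mult_terms:
  "ord_le P NP \<Longrightarrow> ord_le Q NQ \<Longrightarrow> finite {z. deriv_mult_terms P Q n p x z \<noteq> 0}"
  by (rule finite_subset[of _ "({n - NQ..NP} \<times> {..nat (NP + NQ - n)}) \<times> {..p}"])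
    (auto dest: deriv_mult_terms_support)

lemma deriv_iter_mult_coeff:
  assumes "ord_le P NP" "ord_le Q NQ" "smooth_coeffs P" "smooth_coeffs Q"
  shows "(deriv^^p) ((P \<odot> Q) n) x = Sum_any (deriv_mult_terms P Q n p x)"
proof -
  let ?B = "{n - NQ..NP} \<times> {..nat (NP + NQ - n)}"
  have "(P \<odot> Q) n = (\<lambda>x. \<Sum>z\<in>?B. mult_terms P Q n x z)"
    using psdo_mult_eq_sum[OF assms(1,2)] by blast
  moreover have "(deriv^^p) (\<lambda>x. \<Sum>z\<in>?B. mult_terms P Q n x z)
      = (\<lambda>x. \<Sum>z\<in>?B. (deriv^^p) (\<lambda>x. mult_terms P Q n x z) x)"
    using smooth_mult_terms[OF assms(3,4)] by (intro deriv_iter_sum) (metis surj_pair)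
  ultimately have "(deriv^^p) ((P \<odot> Q) n) x
      = (\<Sum>(j, m)\<in>?B. (deriv^^p) (\<lambda>x. mult_terms P Q n x (j, m)) x)"
    by (simp add: case_prod_beta')
  also have "\<dots> = (\<Sum>(j, m)\<in>?B. \<Sum>q\<le>p. deriv_mult_terms P Q n p x ((j, m), q))"
    by (intro sum.cong refl)
      (auto simp: deriv_iter_mult_terms[OF assms(3,4)] deriv_mult_terms_def sum_distrib_left algebra_simps)
  also have "\<dots> = sum (deriv_mult_terms P Q n p x) (?B \<times> {..p})"
    by (simp add: sum.cartesian_product case_prod_beta')
  also have "\<dots> = Sum_any (deriv_mult_terms P Q n p x)"
    by (rule Sum_any.expand_superset[symmetric]) (auto dest: deriv_mult_terms_support[OF assms(1,2)])
  finally show ?thesis .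
qed

definition adj_terms :: "psdo \<Rightarrow> int \<Rightarrow> real \<Rightarrow> nat \<Rightarrow> real" where
  "adj_terms P n x = (\<lambda>k. alt_sign (n + int k) * binom (n + int k) k * (deriv^^k) (P (n + int k)) x)"

lemma adj_terms_support: "ord_le P N \<Longrightarrow> adj_terms P n x k \<noteq> 0 \<Longrightarrow> k \<le> nat (N - n)"
  unfolding adj_terms_def by (fastforce dest: ord_le_deriv_iter_nonzero)

lemma finite_adj_terms: "ord_le P N \<Longrightarrow> finite {k. adj_terms P n x k \<noteq> 0}"
  by (rule finite_subset[of _ "{..nat (N - n)}"]) (auto dest: adj_terms_support)

lemma psdo_adj_eq_sum:
  assumes "ord_le P N"
  shows "psdo_adj P n x = (\<Sum>k\<le>nat (N - n). adj_terms P n x k)"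
proof -
  have "psdo_adj P n x = sum (adj_terms P n x) {k. P (n + int k) \<noteq> (\<lambda>_. 0)}"
    unfolding psdo_adj_def adj_terms_def ..
  also have "\<dots> = (\<Sum>k\<le>nat (N - n). adj_terms P n x k)"
  proof (rule sum.mono_neutral_left)
    show "{k. P (n + int k) \<noteq> (\<lambda>_. 0)} \<subseteq> {..nat (N - n)}"
      using assms unfolding ord_le_def by (force simp: not_le[symmetric])
  qed (auto simp: adj_terms_def)
  finally show ?thesis .
qed

lemma psdo_adj_eq_Sum_any:
  assumes "ord_le P N"
  shows "psdo_adj P n x = Sum_any (adj_terms P n x)"
proof -
  have "Sum_any (adj_terms P n x) = (\<Sum>k\<le>nat (N - n). adj_terms P n x k)"
    by (rule Sum_any.expand_superset) (auto dest: adj_terms_support[OF assms])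
  then show ?thesis using psdo_adj_eq_sum[OF assms] by simp
qed

lemma ord_le_adj:
  assumes "ord_le P N"
  shows "ord_le (psdo_adj P) N"
  unfolding ord_le_def
proof (intro allI impI ext)
  fix n x assume "N < n"
  then show "psdo_adj P n x = 0"
    by (simp add: psdo_adj_eq_sum[OF assms] adj_terms_def ord_le_vanishes[OF assms])
qed

lemma ord_le_deriv_iter_coeffs: "ord_le P N \<Longrightarrow> ord_le (\<lambda>i. (deriv^^p) (P i)) N"
  unfolding ord_le_def by simp

lemma
  assumes "ord_le P N" "smooth_coeffs P"
  shows smooth_coeffs_adj: "smooth_coeffs (psdo_adj P)"
    and deriv_iter_adj_coeff: "(deriv^^p) (psdo_adj P n) = psdo_adj (\<lambda>i. (deriv^^p) (P i)) n"
proof -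
  have e: "psdo_adj P n = (\<lambda>x. \<Sum>k\<le>nat (N - n). adj_terms P n x k)" for n
    by (rule ext) (rule psdo_adj_eq_sum[OF assms(1)])
  have s: "smooth (\<lambda>x. adj_terms P n x k)" for n k
    using assms(2) unfolding adj_terms_def smooth_coeffs_def by (intro smooth_cmult smooth_deriv_iter) auto
  show "smooth_coeffs (psdo_adj P)"
    unfolding smooth_coeffs_def e by (intro allI smooth_sum s)
  have "(deriv^^p) (\<lambda>x. adj_terms P n x k) = (\<lambda>x. adj_terms (\<lambda>i. (deriv^^p) (P i)) n x k)" for k
    using assms(2) unfolding adj_terms_def smooth_coeffs_def
    by (simp add: deriv_iter_cmult smooth_deriv_iter deriv_iter_deriv_iter add.commute)
  then show "(deriv^^p) (psdo_adj P n) = psdo_adj (\<lambda>i. (deriv^^p) (P i)) n"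
    unfolding e deriv_iter_sum[OF s]
    by (simp add: fun_eq_iff psdo_adj_eq_sum[OF ord_le_deriv_iter_coeffs[OF assms(1)]])
qed

section \<open>Associativity and the adjoint of a product\<close>

text \<open>Both bracketings of \<open>P \<odot> Q \<odot> R\<close> are brought to a sum indexed by \<open>((a, j, q), r)\<close>; for the
  right bracketing this needs the Chu--Vandermonde identity \<open>binom_mult_binom_eq_sum\<close>.\<close>

lemma binom_mult_binom_eq_sum:
  fixes a j :: int
  shows "binom (a + j - int q) r * binom a q
     = (\<Sum>t\<le>r. binom a (q + t) * binom j (r - t) * of_nat ((q + t) choose q))"
proof -
  have "binom a (q + t) * of_nat ((q + t) choose q) = binom a q * ((of_int a - of_nat q) gchoose t)" for t
    using gbinomial_trinomial_revision[of q "q + t" "of_int a :: real"] by (simp add: binomial_gbinomial)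
  then have "(\<Sum>t\<le>r. binom a (q + t) * binom j (r - t) * of_nat ((q + t) choose q))
     = binom a q * (\<Sum>t\<le>r. ((of_int a - of_nat q) gchoose t) * binom j (r - t))"
    unfolding sum_distrib_left by (intro sum.cong) (auto simp: algebra_simps)
  also have "(\<Sum>t\<le>r. ((of_int a - of_nat q) gchoose t) * binom j (r - t))
      = ((of_int a - of_nat q + of_int j) gchoose r)"
    using gbinomial_Vandermonde[of "of_int a - of_nat q :: real" "of_int j" r] by (simp add: atLeast0AtMost)
  finally show ?thesis by (simp add: algebra_simps)
qed

definition triple_terms ::
    "psdo \<Rightarrow> psdo \<Rightarrow> psdo \<Rightarrow> int \<Rightarrow> real \<Rightarrow> (int \<times> int \<times> nat) \<times> nat \<Rightarrow> real" where
  "triple_terms P Q R n x = (\<lambda>((a, j, q), r).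
     P a x * ((deriv^^q) (Q j) x * (deriv^^r) (R (n + int q + int r - a - j)) x))"

lemma finite_triple_terms:
  assumes "ord_le P N" "ord_le Q N" "ord_le R N"
  shows "finite {z. triple_terms P Q R n x z \<noteq> 0}"
proof (rule finite_subset)
  let ?I = "{n - 2 * N..N}" and ?K = "{..nat (3 * N - n)}"
  have "z \<in> (?I \<times> ?I \<times> ?K) \<times> ?K" if "triple_terms P Q R n x z \<noteq> 0" for z
  proof -
    obtain a j q r where z: "z = ((a, j, q), r)" by (metis prod.collapse)
    have "a \<le> N" "j \<le> N" "n + int q + int r - a - j \<le> N"
      using that assms ord_le_nonzero ord_le_deriv_iter_nonzero by (fastforce simp: z triple_terms_def)+
    then show ?thesis by (auto simp: z)
  qed
  then show "{z. triple_terms P Q R n x z \<noteq> 0} \<subseteq> (?I \<times> ?I \<times> ?K) \<times> ?K" by blast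
qed auto

lemma mult_terms_mult_left:
  assumes "ord_le P NP" "ord_le Q NQ"
  shows "mult_terms (P \<odot> Q) R n x (i, k)
    = Sum_any (\<lambda>am. (binom i k * (deriv^^k) (R (n + int k - i)) x) * mult_terms P Q i x am)"
  unfolding Sum_any_right_distrib[OF finite_mult_terms[OF assms], symmetric]
  by (simp add: mult_terms_def psdo_mult_eq_Sum_any[OF assms] algebra_simps)

lemma psdo_mult_mult_left_expansion:
  assumes P: "ord_le P N" and Q: "ord_le Q N" and R: "ord_le R N"
  shows "((P \<odot> Q) \<odot> R) n x
    = Sum_any (\<lambda>((a, j, q), r). binom (a + j - int q) r * binom a q * triple_terms P Q R n x ((a, j, q), r))"
    (is "_ = Sum_any ?\<Phi>")
proof -
  define g where "g = (\<lambda>(i::int, k::nat) (a::int, m::nat). binom i k * binom a m *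
    (P a x * ((deriv^^m) (Q (i + int m - a)) x * (deriv^^k) (R (n + int k - i)) x)))"
  define l where "l = (\<lambda>((a::int, j::int, q::nat), r::nat). ((a + j - int q, r), (a, q)))"
  have "((P \<odot> Q) \<odot> R) n x = Sum_any (\<lambda>ik. Sum_any (g ik))"
    unfolding psdo_mult_eq_Sum_any[OF ord_le_mult[OF P Q] R]
  proof (rule Sum_any.cong)
    fix ik :: "int \<times> nat"
    show "mult_terms (P \<odot> Q) R n x ik = Sum_any (g ik)"
      by (cases ik) (simp only: mult_terms_mult_left[OF P Q],
          auto simp: g_def mult_terms_def algebra_simps intro!: Sum_any.cong)
  qed
  also have "\<dots> = Sum_any ((\<lambda>(ik, am). g ik am) \<circ> l)"
  proof (rule Sum_any_Sum_any_reindex)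
    show "inj l" by (auto simp: l_def intro!: injI)
    show "(ik, am) \<in> range l" for ik am
    proof -
      obtain i k a m where e: "ik = (i, k)" "am = (a, m)" by fastforce
      have "(ik, am) = l ((a, i + int m - a, m), k)" by (simp add: e l_def)
      then show ?thesis by blast
    qed
    have "(\<lambda>(ik, am). g ik am) \<circ> l = ?\<Phi>"
      by (auto simp: g_def l_def triple_terms_def algebra_simps)
    moreover have "{z. ?\<Phi> z \<noteq> 0} \<subseteq> {z. triple_terms P Q R n x z \<noteq> 0}"
      by (auto split: prod.splits)
    ultimately show "finite {z. ((\<lambda>(ik, am). g ik am) \<circ> l) z \<noteq> 0}"
      using finite_triple_terms[OF P Q R, of n x] by (auto intro: finite_subset)
  qed
  also have "(\<lambda>(ik, am). g ik am) \<circ> l = ?\<Phi>"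
    by (auto simp: g_def l_def triple_terms_def algebra_simps)
  finally show ?thesis .
qed

lemma mult_terms_mult_right:
  assumes "ord_le Q NQ" "ord_le R NR" "smooth_coeffs Q" "smooth_coeffs R"
  shows "mult_terms P (Q \<odot> R) n x (a, p)
    = Sum_any (\<lambda>jmq. (binom a p * P a x) * deriv_mult_terms Q R (n + int p - a) p x jmq)"
  unfolding Sum_any_right_distrib[OF finite_deriv_mult_terms[OF assms(1,2)], symmetric]
  by (simp add: mult_terms_def deriv_iter_mult_coeff[OF assms] algebra_simps)

lemma psdo_mult_mult_right_expansion:
  assumes P: "ord_le P N" and Q: "ord_le Q N" and R: "ord_le R N"
    and sQ: "smooth_coeffs Q" and sR: "smooth_coeffs R"
  shows "(P \<odot> (Q \<odot> R)) n x
    = Sum_any (\<lambda>((a, j, q), r). binom (a + j - int q) r * binom a q * triple_terms P Q R n x ((a, j, q), r))"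
    (is "_ = Sum_any ?\<Phi>")
proof -
  define G where "G = (\<lambda>(a::int, p::nat) jmq.
    (binom a p * P a x) * deriv_mult_terms Q R (n + int p - a) p x jmq)"
  define l where "l = (\<lambda>((a::int, j::int, q::nat), t::nat, m::nat). ((a, q + t), ((j, m), q)))"
  define g where "g = (\<lambda>(a::int, j::int, q::nat) t m.
    binom a (q + t) * binom j m * of_nat ((q + t) choose q) * triple_terms P Q R n x ((a, j, q), t + m))"
  have "(P \<odot> (Q \<odot> R)) n x = Sum_any (\<lambda>ap. Sum_any (G ap))"
    unfolding psdo_mult_eq_Sum_any[OF P ord_le_mult[OF Q R]]
    by (intro Sum_any.cong) (auto simp: G_def mult_terms_mult_right[OF Q R sQ sR])
  also have "\<dots> = Sum_any (\<lambda>(z, r). \<Sum>t\<le>r. g z t (r - t))"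
  proof (rule Sum_any_Sum_any_reindex_antidiagonal[where S = "{z. triple_terms P Q R n x z \<noteq> 0}"])
    show "inj l" by (auto simp: l_def intro!: injI)
    show "(ap, jmq) \<in> range l" if "G ap jmq \<noteq> 0" for ap jmq
    proof -
      obtain a p j m q where e: "ap = (a, p)" "jmq = ((j, m), q)" by (metis prod.collapse)
      have "q \<le> p" using that by (simp add: e G_def deriv_mult_terms_def split: if_splits)
      then have "(ap, jmq) = l ((a, j, q), p - q, m)" by (simp add: e l_def)
      then show ?thesis by blast
    qed
    show "(\<lambda>(ap, jmq). G ap jmq) \<circ> l = (\<lambda>(z, t, m). g z t m)"
      by (auto simp: fun_eq_iff G_def l_def g_def deriv_mult_terms_def triple_terms_def algebra_simps)
    show "g z t m \<noteq> 0 \<Longrightarrow> (z, t + m) \<in> {z. triple_terms P Q R n x z \<noteq> 0}" for z t m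
      by (auto simp: g_def split: prod.splits)
  qed (rule finite_triple_terms[OF P Q R])
  also have "\<dots> = Sum_any ?\<Phi>"
  proof (intro Sum_any.cong)
    fix zr :: "(int \<times> int \<times> nat) \<times> nat"
    obtain a j q r where zr: "zr = ((a, j, q), r)" by (metis prod.collapse)
    have "(\<Sum>t\<le>r. g (a, j, q) t (r - t)) = binom (a + j - int q) r * binom a q * triple_terms P Q R n x zr"
      unfolding binom_mult_binom_eq_sum sum_distrib_right by (intro sum.cong) (auto simp: g_def zr)
    then show "(case zr of (z, r) \<Rightarrow> \<Sum>t\<le>r. g z t (r - t)) = ?\<Phi> zr"
      by (simp add: zr)
  qed
  finally show ?thesis .
qed

lemma psdo_mult_assoc:
  assumes "is_psdo P" "is_psdo Q" "is_psdo R"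
  shows "(P \<odot> Q) \<odot> R = P \<odot> (Q \<odot> R)"
proof -
  obtain NP NQ NR where "ord_le P NP" "ord_le Q NQ" "ord_le R NR"
    "smooth_coeffs Q" "smooth_coeffs R"
    using assms unfolding is_psdo_iff by blast
  then have "ord_le P (max NP (max NQ NR))" "ord_le Q (max NP (max NQ NR))" "ord_le R (max NP (max NQ NR))"
    "smooth_coeffs Q" "smooth_coeffs R"
    by (auto elim!: ord_le_mono)
  then show ?thesis
    by (intro ext) (simp add: psdo_mult_mult_left_expansion psdo_mult_mult_right_expansion)
qed

lemma alt_sign_add: "alt_sign (a + b) = alt_sign a * alt_sign b"
  by (rule power_int_add) simp

lemma alt_sign_split: "alt_sign (n + int a + int b) = alt_sign n * (-1) ^ a * (-1) ^ b"
  by (simp add: alt_sign_add)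

text \<open>Upper negation turns the alternating binomial coefficients into ordinary ones, after which
  the next three identities are instances of trinomial revision and Chu--Vandermonde.\<close>

lemma adj_mult_left_coeff_identity:
  fixes n i :: int and \<alpha> \<beta> :: nat
  shows "(\<Sum>t\<le>\<beta>. alt_sign (n + int \<alpha> + int t) * binom (n + int \<alpha> + int t) (\<alpha>+t)
            * binom i (\<beta>-t) * of_nat ((\<alpha>+t) choose \<alpha>))
      = alt_sign (n + int \<alpha> + int \<beta>) * binom (n + int \<alpha>) \<alpha> * binom (n + int \<alpha> + int \<beta> - i) \<beta>"
proof -
  define z :: real where "z = - of_int n - 1"
  have summand: "alt_sign (n + int \<alpha> + int t) * binom (n + int \<alpha> + int t) (\<alpha>+t)
        * binom i (\<beta>-t) * of_nat ((\<alpha>+t) choose \<alpha>)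
     = alt_sign n * (z gchoose \<alpha>) * (((z - of_nat \<alpha>) gchoose t) * binom i (\<beta> - t))" for t
  proof -
    have negated: "binom (n + int \<alpha> + int t) (\<alpha>+t) = (-1)^(\<alpha>+t) * (z gchoose (\<alpha>+t))"
      by (subst gbinomial_negated_upper) (simp add: z_def algebra_simps)
    have revision: "(z gchoose (\<alpha>+t)) * of_nat ((\<alpha>+t) choose \<alpha>) = (z gchoose \<alpha>) * ((z - of_nat \<alpha>) gchoose t)"
      using gbinomial_trinomial_revision[of \<alpha> "\<alpha>+t" z] by (simp add: binomial_gbinomial)
    have sign: "alt_sign (n + int \<alpha> + int t) * (-1)^(\<alpha>+t) = alt_sign n"
    proof -
      have "alt_sign (n + int \<alpha> + int t) = alt_sign n * alt_sign (int (\<alpha>+t))"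
        by (metis add.assoc of_nat_add alt_sign_add)
      then show ?thesis
        by (metis mult.assoc mult.right_neutral power_int_of_nat power_int_minus_one_mult_self)
    qed
    have "alt_sign (n + int \<alpha> + int t) * binom (n + int \<alpha> + int t) (\<alpha>+t)
          * binom i (\<beta>-t) * of_nat ((\<alpha>+t) choose \<alpha>)
        = (alt_sign (n + int \<alpha> + int t) * (-1)^(\<alpha>+t))
          * ((z gchoose (\<alpha>+t)) * of_nat ((\<alpha>+t) choose \<alpha>)) * binom i (\<beta>-t)"
      unfolding negated by (simp add: algebra_simps)
    also have "\<dots> = alt_sign n * (z gchoose \<alpha>) * (((z - of_nat \<alpha>) gchoose t) * binom i (\<beta> - t))"
      unfolding revision sign by (simp add: algebra_simps)
    finally show ?thesis .
  qed
  have "(\<Sum>t\<le>\<beta>. alt_sign (n + int \<alpha> + int t) * binom (n + int \<alpha> + int t) (\<alpha>+t)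
          * binom i (\<beta>-t) * of_nat ((\<alpha>+t) choose \<alpha>))
      = alt_sign n * (z gchoose \<alpha>) * (\<Sum>t\<le>\<beta>. ((z - of_nat \<alpha>) gchoose t) * binom i (\<beta> - t))"
    unfolding summand sum_distrib_left by (rule refl)
  also have "(\<Sum>t\<le>\<beta>. ((z - of_nat \<alpha>) gchoose t) * binom i (\<beta> - t))
      = ((z - of_nat \<alpha> + of_int i) gchoose \<beta>)"
    using gbinomial_Vandermonde[of "z - of_nat \<alpha>" "of_int i" \<beta>] by (simp add: atLeast0AtMost)
  also have "(z gchoose \<alpha>) = (-1)^\<alpha> * binom (n + int \<alpha>) \<alpha>"
    by (subst gbinomial_negated_upper) (simp add: z_def algebra_simps)
  also have "((z - of_nat \<alpha> + of_int i) gchoose \<beta>) = (-1)^\<beta> * binom (n + int \<alpha> + int \<beta> - i) \<beta>"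
    by (subst gbinomial_negated_upper) (simp add: z_def algebra_simps)
  finally show ?thesis unfolding alt_sign_split by (simp add: algebra_simps)
qed

lemma adj_mult_right_coeff_identity:
  fixes n i :: int and \<alpha> \<beta> :: nat
  shows "(\<Sum>u\<le>\<alpha>. binom (n + int \<alpha> - i) u * alt_sign (n + int \<alpha> - i + int \<beta>)
            * binom (n + int \<alpha> - i + int \<beta>) \<beta> * alt_sign i * binom i (\<alpha>-u))
      = alt_sign (n + int \<alpha> + int \<beta>) * binom (n + int \<alpha>) \<alpha> * binom (n + int \<alpha> + int \<beta> - i) \<beta>"
proof -
  have sign: "alt_sign (n + int \<alpha> - i + int \<beta>) * alt_sign i = alt_sign (n + int \<alpha> + int \<beta>)"
    by (metis diff_add_cancel add.commute add.left_commute alt_sign_add)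
  have "(\<Sum>u\<le>\<alpha>. binom (n + int \<alpha> - i) u * alt_sign (n + int \<alpha> - i + int \<beta>)
          * binom (n + int \<alpha> - i + int \<beta>) \<beta> * alt_sign i * binom i (\<alpha>-u))
     = (alt_sign (n + int \<alpha> - i + int \<beta>) * alt_sign i) * binom (n + int \<alpha> - i + int \<beta>) \<beta>
          * (\<Sum>u\<le>\<alpha>. binom (n + int \<alpha> - i) u * binom i (\<alpha>-u))"
    by (simp add: sum_distrib_left algebra_simps)
  also have "(\<Sum>u\<le>\<alpha>. binom (n + int \<alpha> - i) u * binom i (\<alpha>-u)) = binom (n + int \<alpha>) \<alpha>"
    using gbinomial_Vandermonde[of "of_int (n + int \<alpha> - i)" "of_int i" \<alpha>] by (simp add: atLeast0AtMost)
  finally show ?thesis unfolding sign by (simp add: algebra_simps)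
qed

lemma adj_adj_coeff_identity:
  fixes n :: int
  shows "(\<Sum>k\<le>r. alt_sign (n + int k) * binom (n + int k) k * (alt_sign (n + int r) * binom (n + int r) (r - k)))
    = (if r = 0 then 1 else 0)"
proof -
  have summand: "alt_sign (n + int k) * binom (n + int k) k * (alt_sign (n + int r) * binom (n + int r) (r - k))
     = binom (n + int r) r * ((-1)^(r-k) * of_nat (r choose (r-k)))" if "k \<le> r" for k
  proof -
    have sign: "alt_sign (n + int k) * alt_sign (n + int r) = (-1)^(r-k)"
    proof -
      have "n + int r = (n + int k) + int (r - k)" using that by simp
      then have "alt_sign (n + int r) = alt_sign (n + int k) * (-1)^(r-k)"
        by (simp only: alt_sign_add power_int_of_nat)
      then show ?thesis by (metis mult.assoc mult_1 power_int_minus_one_mult_self)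
    qed
    have revision: "binom (n + int r) r * of_nat (r choose (r-k)) = binom (n + int r) (r-k) * binom (n + int k) k"
      using gbinomial_trinomial_revision[of "r-k" r "of_int (n + int r)"] that
      by (simp add: binomial_gbinomial of_nat_diff)
    show ?thesis using sign revision by (simp add: algebra_simps) (metis mult.commute mult.left_commute)
  qed
  have "(\<Sum>k\<le>r. alt_sign (n + int k) * binom (n + int k) k * (alt_sign (n + int r) * binom (n + int r) (r - k)))
      = binom (n + int r) r * (\<Sum>k\<le>r. (-1)^(r-k) * of_nat (r choose (r-k)))"
    unfolding sum_distrib_left by (rule sum.cong[OF refl], rule summand, simp)
  also have "(\<Sum>k\<le>r. (-1)^(r-k) * of_nat (r choose (r-k)) :: real) = (\<Sum>j\<le>r. (-1)^j * of_nat (r choose j))"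
    by (rule sum.reindex_bij_witness[of _ "\<lambda>j. r - j" "\<lambda>k. r - k"]) auto
  finally show ?thesis
    by (cases "r = 0") (simp_all add: choose_alternating_sum)
qed

definition pair_terms ::
    "psdo \<Rightarrow> psdo \<Rightarrow> int \<Rightarrow> real \<Rightarrow> (int \<times> nat) \<times> nat \<Rightarrow> real" where
  "pair_terms P Q n x = (\<lambda>((i, a), b). (deriv^^a) (P i) x * (deriv^^b) (Q (n + int a + int b - i)) x)"

lemma finite_pair_terms:
  assumes "ord_le P N" "ord_le Q N"
  shows "finite {z. pair_terms P Q n x z \<noteq> 0}"
proof (rule finite_subset)
  let ?K = "{..nat (2 * N - n)}"
  have "z \<in> ({n - N..N} \<times> ?K) \<times> ?K" if "pair_terms P Q n x z \<noteq> 0" for z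
  proof -
    obtain i a b where z: "z = ((i, a), b)" by (metis prod.collapse)
    have "i \<le> N" "n + int a + int b - i \<le> N"
      using that assms ord_le_deriv_iter_nonzero by (fastforce simp: z pair_terms_def)+
    then show ?thesis by (auto simp: z)
  qed
  then show "{z. pair_terms P Q n x z \<noteq> 0} \<subseteq> ({n - N..N} \<times> ?K) \<times> ?K" by blast
qed auto

lemma adj_terms_mult:
  assumes "ord_le P NP" "ord_le Q NQ" "smooth_coeffs P" "smooth_coeffs Q"
  shows "adj_terms (P \<odot> Q) n x k = Sum_any (\<lambda>iml.
    (alt_sign (n + int k) * binom (n + int k) k) * deriv_mult_terms P Q (n + int k) k x iml)"
  unfolding Sum_any_right_distrib[OF finite_deriv_mult_terms[OF assms(1,2)], symmetric]
  by (simp add: adj_terms_def deriv_iter_mult_coeff[OF assms])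

lemma psdo_adj_mult_expansion:
  assumes P: "ord_le P N" and Q: "ord_le Q N" and sP: "smooth_coeffs P" and sQ: "smooth_coeffs Q"
  shows "psdo_adj (P \<odot> Q) n x = Sum_any (\<lambda>((i, a), b).
    alt_sign (n + int a + int b) * binom (n + int a) a * binom (n + int a + int b - i) b * pair_terms P Q n x ((i, a), b))"
    (is "_ = Sum_any ?\<Phi>")
proof -
  define G where "G = (\<lambda>k::nat. \<lambda>iml.
    (alt_sign (n + int k) * binom (n + int k) k) * deriv_mult_terms P Q (n + int k) k x iml)"
  define l where "l = (\<lambda>((i::int, a::nat), t::nat, m::nat). (a + t, ((i, m), a)))"
  define g where "g = (\<lambda>(i::int, a::nat) t m. alt_sign (n + int a + int t) *
    binom (n + int a + int t) (a + t) * binom i m * of_nat ((a + t) choose a) * pair_terms P Q n x ((i, a), t + m))"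
  have "psdo_adj (P \<odot> Q) n x = Sum_any (\<lambda>k. Sum_any (G k))"
    unfolding psdo_adj_eq_Sum_any[OF ord_le_mult[OF P Q]]
    by (intro Sum_any.cong) (simp add: G_def adj_terms_mult[OF P Q sP sQ])
  also have "\<dots> = Sum_any (\<lambda>(z, b). \<Sum>t\<le>b. g z t (b - t))"
  proof (rule Sum_any_Sum_any_reindex_antidiagonal[where S = "{z. pair_terms P Q n x z \<noteq> 0}"])
    show "inj l" by (auto simp: l_def intro!: injI)
    show "(k, iml) \<in> range l" if "G k iml \<noteq> 0" for k iml
    proof -
      obtain i m q where e: "iml = ((i, m), q)" by (metis prod.collapse)
      have "q \<le> k" using that by (simp add: e G_def deriv_mult_terms_def split: if_splits)
      then have "(k, iml) = l ((i, q), k - q, m)" by (simp add: e l_def)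
      then show ?thesis by blast
    qed
    show "(\<lambda>(k, iml). G k iml) \<circ> l = (\<lambda>(z, t, m). g z t m)"
      by (auto simp: fun_eq_iff G_def l_def g_def deriv_mult_terms_def pair_terms_def algebra_simps)
    show "g z t m \<noteq> 0 \<Longrightarrow> (z, t + m) \<in> {z. pair_terms P Q n x z \<noteq> 0}" for z t m
      by (auto simp: g_def split: prod.splits)
  qed (rule finite_pair_terms[OF P Q])
  also have "\<dots> = Sum_any ?\<Phi>"
  proof (intro Sum_any.cong)
    fix zb :: "(int \<times> nat) \<times> nat"
    obtain i a b where zb: "zb = ((i, a), b)" by (metis prod.collapse)
    have "(\<Sum>t\<le>b. g (i, a) t (b - t)) = alt_sign (n + int a + int b) * binom (n + int a) a
        * binom (n + int a + int b - i) b * pair_terms P Q n x zb"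
      unfolding adj_mult_left_coeff_identity[symmetric] sum_distrib_right
      by (intro sum.cong) (auto simp: g_def zb)
    then show "(case zb of (z, b) \<Rightarrow> \<Sum>t\<le>b. g z t (b - t)) = ?\<Phi> zb"
      by (simp add: zb)
  qed
  finally show ?thesis .
qed

lemma mult_terms_adj_adj:
  assumes P: "ord_le P N" and Q: "ord_le Q N" and sP: "smooth_coeffs P"
  shows "mult_terms (psdo_adj Q) (psdo_adj P) n x (j, p) = Sum_any (\<lambda>(s, s').
    (binom j p * adj_terms Q j x s) * adj_terms (\<lambda>i. (deriv^^p) (P i)) (n + int p - j) x s')"
proof -
  have "finite {s. binom j p * adj_terms Q j x s \<noteq> 0}"
    by (rule finite_subset[OF _ finite_adj_terms[OF Q]]) auto
  moreover have "mult_terms (psdo_adj Q) (psdo_adj P) n x (j, p)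
      = Sum_any (\<lambda>s. binom j p * adj_terms Q j x s)
        * Sum_any (adj_terms (\<lambda>i. (deriv^^p) (P i)) (n + int p - j) x)"
    by (simp add: mult_terms_def deriv_iter_adj_coeff[OF P sP] psdo_adj_eq_Sum_any[OF Q]
        psdo_adj_eq_Sum_any[OF ord_le_deriv_iter_coeffs[OF P]] Sum_any_right_distrib[OF finite_adj_terms[OF Q]])
  ultimately show ?thesis
    using finite_adj_terms[OF ord_le_deriv_iter_coeffs[OF P]] by (simp add: Sum_any_mult_Sum_any)
qed

lemma psdo_mult_adj_adj_expansion:
  assumes P: "ord_le P N" and Q: "ord_le Q N" and sP: "smooth_coeffs P"
  shows "(psdo_adj Q \<odot> psdo_adj P) n x = Sum_any (\<lambda>((i, a), b).
    alt_sign (n + int a + int b) * binom (n + int a) a * binom (n + int a + int b - i) b * pair_terms P Q n x ((i, a), b))"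
    (is "_ = Sum_any ?\<Phi>")
proof -
  define G where "G = (\<lambda>(j::int, p::nat) (s::nat, s'::nat).
    (binom j p * adj_terms Q j x s) * adj_terms (\<lambda>i. (deriv^^p) (P i)) (n + int p - j) x s')"
  define l where "l = (\<lambda>((i::int, b::nat), u::nat, m::nat). ((n + int u + int m - i, u), (b, m)))"
  define g where "g = (\<lambda>(i::int, b::nat) u m. binom (n + int u + int m - i) u *
    alt_sign (n + int u + int m - i + int b) * binom (n + int u + int m - i + int b) b * alt_sign i * binom i m *
    pair_terms P Q n x ((i, u + m), b))"
  define swap where "swap = (\<lambda>((i::int, b::nat), a::nat). ((i, a), b))"
  have "(psdo_adj Q \<odot> psdo_adj P) n x = Sum_any (\<lambda>jp. Sum_any (G jp))"
    unfolding psdo_mult_eq_Sum_any[OF ord_le_adj[OF Q] ord_le_adj[OF P]]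
    by (intro Sum_any.cong) (auto simp: G_def mult_terms_adj_adj[OF P Q sP])
  also have "\<dots> = Sum_any (\<lambda>(z, a). \<Sum>t\<le>a. g z t (a - t))"
  proof (rule Sum_any_Sum_any_reindex_antidiagonal[where S = "swap ` {z. pair_terms P Q n x z \<noteq> 0}"])
    show "inj l" by (auto simp: l_def intro!: injI)
    show "(jp, ss) \<in> range l" for jp ss
    proof -
      obtain j p s s' where e: "jp = (j, p)" "ss = (s, s')" by fastforce
      have "(jp, ss) = l ((n + int p + int s' - j, s), p, s')" by (simp add: e l_def)
      then show ?thesis by blast
    qed
    show "(\<lambda>(jp, ss). G jp ss) \<circ> l = (\<lambda>(z, t, m). g z t m)"
      by (auto simp: fun_eq_iff G_def l_def g_def adj_terms_def pair_terms_def deriv_iter_deriv_iter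
          algebra_simps)
    show "g z t m \<noteq> 0 \<Longrightarrow> (z, t + m) \<in> swap ` {z. pair_terms P Q n x z \<noteq> 0}" for z t m
      by (auto simp: g_def swap_def image_iff split: prod.splits)
  qed (use finite_pair_terms[OF P Q] in simp)
  also have "\<dots> = Sum_any (?\<Phi> \<circ> swap)"
  proof (intro Sum_any.cong)
    fix za :: "(int \<times> nat) \<times> nat"
    obtain i b a where za: "za = ((i, b), a)" by (metis prod.collapse)
    have "(\<Sum>t\<le>a. g (i, b) t (a - t)) = alt_sign (n + int a + int b) * binom (n + int a) a
        * binom (n + int a + int b - i) b * pair_terms P Q n x ((i, a), b)"
      unfolding adj_mult_right_coeff_identity[symmetric] sum_distrib_right
      by (intro sum.cong) (auto simp: g_def of_nat_diff)
    then show "(case za of (z, a) \<Rightarrow> \<Sum>t\<le>a. g z t (a - t)) = (?\<Phi> \<circ> swap) za"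
      by (simp add: za swap_def)
  qed
  also have "\<dots> = Sum_any ?\<Phi>"
    by (rule Sum_any.reindex_cong[symmetric, of swap]) (auto simp: swap_def bij_def inj_def image_iff)
  finally show ?thesis .
qed

lemma psdo_adj_mult:
  assumes "is_psdo P" "is_psdo Q"
  shows "psdo_adj (P \<odot> Q) = psdo_adj Q \<odot> psdo_adj P"
proof -
  obtain NP NQ where "ord_le P NP" "ord_le Q NQ" "smooth_coeffs P" "smooth_coeffs Q"
    using assms unfolding is_psdo_iff by blast
  then have "ord_le P (max NP NQ)" "ord_le Q (max NP NQ)" "smooth_coeffs P" "smooth_coeffs Q"
    by (auto elim!: ord_le_mono)
  then show ?thesis
    by (intro ext) (simp add: psdo_adj_mult_expansion psdo_mult_adj_adj_expansion)
qed

lemma adj_terms_adj: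
  assumes "ord_le P N" "smooth_coeffs P"
  shows "adj_terms (psdo_adj P) n x k = Sum_any (\<lambda>l.
    alt_sign (n + int k) * binom (n + int k) k * adj_terms (\<lambda>i. (deriv^^k) (P i)) (n + int k) x l)"
  unfolding Sum_any_right_distrib[OF finite_adj_terms[OF ord_le_deriv_iter_coeffs[OF assms(1)]], symmetric]
  by (simp add: adj_terms_def deriv_iter_adj_coeff[OF assms] psdo_adj_eq_Sum_any[OF ord_le_deriv_iter_coeffs[OF assms(1)]])

lemma psdo_adj_adj:
  assumes "is_psdo P"
  shows "psdo_adj (psdo_adj P) = P"
proof (intro ext)
  fix n x
  obtain N where P: "ord_le P N" and sP: "smooth_coeffs P"
    using assms unfolding is_psdo_iff by blast
  define F where "F = (\<lambda>k l. alt_sign (n + int k) * binom (n + int k) k *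
    adj_terms (\<lambda>i. (deriv^^k) (P i)) (n + int k) x l)"
  have F_support: "k + l \<in> {..nat (N - n)}" if "F k l \<noteq> 0" for k l
  proof -
    have "(deriv^^(l + k)) (P (n + int k + int l)) x \<noteq> 0"
      using that by (simp add: F_def adj_terms_def deriv_iter_deriv_iter)
    then have "n + int k + int l \<le> N" by (rule ord_le_deriv_iter_nonzero[OF P])
    then show ?thesis by auto
  qed
  have "psdo_adj (psdo_adj P) n x = Sum_any (\<lambda>k. Sum_any (F k))"
    unfolding psdo_adj_eq_Sum_any[OF ord_le_adj[OF P]] F_def adj_terms_adj[OF P sP] ..
  also have "\<dots> = Sum_any (\<lambda>(k, l). F k l)"
  proof (rule Sum_any_Sum_any)
    have "{(k, l). F k l \<noteq> 0} \<subseteq> {..nat (N - n)} \<times> {..nat (N - n)}"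
      using F_support by fastforce
    then show "finite {(k, l). F k l \<noteq> 0}" by (rule finite_subset) auto
  qed
  also have "\<dots> = Sum_any (\<lambda>r. \<Sum>k\<le>r. F k (r - k))"
    by (rule Sum_any_antidiagonal_nat[symmetric, OF _ F_support]) auto
  also have "\<dots> = Sum_any (\<lambda>r::nat. if r = 0 then P n x else 0)"
  proof (rule Sum_any.cong)
    fix r
    have "(\<Sum>k\<le>r. F k (r - k)) = (if r = 0 then 1 else 0) * (deriv^^r) (P (n + int r)) x"
      unfolding adj_adj_coeff_identity[of n r, symmetric] sum_distrib_right
      by (intro sum.cong) (auto simp: F_def adj_terms_def deriv_iter_deriv_iter algebra_simps)
    then show "(\<Sum>k\<le>r. F k (r - k)) = (if r = 0 then P n x else 0)"
      by simp
  qed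
  also have "\<dots> = P n x" by simp
  finally show "psdo_adj (psdo_adj P) n x = P n x" .
qed

section \<open>Monomials, negation and constant coefficients\<close>

lemma ord_le_dpow: "ord_le (dpow m) m"
  unfolding ord_le_def dpow_def by auto

lemma smooth_coeffs_dpow: "smooth_coeffs (dpow m)"
  unfolding smooth_coeffs_def dpow_def by auto

lemma is_psdo_dpow: "is_psdo (dpow m)"
  unfolding is_psdo_iff using ord_le_dpow smooth_coeffs_dpow by blast

lemma deriv_iter_dpow: "(deriv^^k) (dpow m j) x = (if k = 0 \<and> j = m then 1 else 0)"
  by (cases k) (simp_all add: dpow_def del: funpow.simps)

lemma psdo_mult_dpow_right: "ord_le P N \<Longrightarrow> (P \<odot> dpow m) n x = P (n - m) x"
  by (simp add: psdo_mult_eq_Sum_any[OF _ ord_le_dpow] Sum_any.expand_superset[of "{(n - m, 0)}"]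
      mult_terms_def deriv_iter_dpow subset_iff)

lemma psdo_mult_dpow_left:
  assumes "ord_le P N"
  shows "(dpow m \<odot> P) n x = Sum_any (\<lambda>k. binom m k * (deriv^^k) (P (n + int k - m)) x)"
proof -
  have "(dpow m \<odot> P) n x = Sum_any (mult_terms (dpow m) P n x \<circ> Pair m)"
    unfolding psdo_mult_eq_Sum_any[OF ord_le_dpow assms]
    by (rule Sum_any_reindex_inj) (auto simp: mult_terms_def dpow_def intro: injI split: if_splits)
  then show ?thesis by (simp add: mult_terms_def dpow_def comp_def)
qed

lemma psdo_mult_dpow0_left: "ord_le P N \<Longrightarrow> (dpow 0 \<odot> P) n x = P n x"
  by (simp add: psdo_mult_dpow_left Sum_any.expand_superset[of "{0}"] subset_iff gbinomial_0_left)

lemma binom_1_eq_0: "2 \<le> k \<Longrightarrow> binom 1 k = 0"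
  using binomial_gbinomial[of 1 k, where 'a=real] by (simp add: binomial_eq_0)

lemma psdo_mult_dpow1_left:
  assumes "ord_le P N"
  shows "(dpow 1 \<odot> P) n x = P (n - 1) x + deriv (P n) x"
proof -
  have "Sum_any (\<lambda>k. binom 1 k * (deriv^^k) (P (n + int k - 1)) x)
      = (\<Sum>k\<in>{0, 1}. binom 1 k * (deriv^^k) (P (n + int k - 1)) x)"
  proof (rule Sum_any.expand_superset)
    have "k \<in> {0, 1}" if "binom 1 k \<noteq> 0" for k
      using that binom_1_eq_0[of k] by fastforce
    then show "{k. binom 1 k * (deriv^^k) (P (n + int k - 1)) x \<noteq> 0} \<subseteq> {0, 1}" by auto
  qed simp
  then show ?thesis by (simp add: psdo_mult_dpow_left[OF assms])
qed

lemma dpow_mult_dpow: "dpow m \<odot> dpow k = dpow (m + k)"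
  by (intro ext) (simp add: psdo_mult_dpow_right[OF ord_le_dpow], simp add: dpow_def)

lemma psdo_mult_one_left: "is_psdo P \<Longrightarrow> dpow 0 \<odot> P = P"
  unfolding is_psdo_iff using psdo_mult_dpow0_left by (intro ext) blast

lemma psdo_mult_one_right: "is_psdo P \<Longrightarrow> P \<odot> dpow 0 = P"
  unfolding is_psdo_iff using psdo_mult_dpow_right by (intro ext) (metis diff_zero)

lemma psdo_adj_dpow: "psdo_adj (dpow m) = (\<lambda>n x. alt_sign m * dpow m n x)"
proof (intro ext)
  fix n x
  have "Sum_any (adj_terms (dpow m) n x) = sum (adj_terms (dpow m) n x) {0}"
    by (rule Sum_any.expand_superset) (auto simp: adj_terms_def deriv_iter_dpow)
  then show "psdo_adj (dpow m) n x = alt_sign m * dpow m n x"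
    unfolding psdo_adj_eq_Sum_any[OF ord_le_dpow] by (simp add: adj_terms_def) (simp add: dpow_def)
qed

lemma is_psdo_mult:
  assumes "is_psdo P" "is_psdo Q"
  shows "is_psdo (P \<odot> Q)"
proof -
  obtain NP NQ where "ord_le P NP" "ord_le Q NQ" "smooth_coeffs P" "smooth_coeffs Q"
    using assms unfolding is_psdo_iff by blast
  then show ?thesis
    unfolding is_psdo_iff by (blast intro: ord_le_mult smooth_coeffs_mult)
qed

lemma is_psdo_adj:
  assumes "is_psdo P"
  shows "is_psdo (psdo_adj P)"
proof -
  obtain N where "ord_le P N" "smooth_coeffs P"
    using assms unfolding is_psdo_iff by blast
  then show ?thesis
    unfolding is_psdo_iff by (blast intro: ord_le_adj smooth_coeffs_adj)
qed

lemma Sum_any_uminus: "Sum_any (\<lambda>a. - f a) = - Sum_any (f :: 'a \<Rightarrow> 'b::ab_group_add)"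
  by (simp add: Sum_any.expand_set sum_negf)

definition psdo_neg :: "psdo \<Rightarrow> psdo" where
  "psdo_neg P = (\<lambda>n x. - P n x)"

lemma psdo_neg_neg [simp]: "psdo_neg (psdo_neg P) = P"
  by (simp add: psdo_neg_def)

lemma ord_le_neg: "ord_le P N \<Longrightarrow> ord_le (psdo_neg P) N"
  by (simp add: ord_le_def psdo_neg_def)

lemma is_psdo_neg: "is_psdo P \<Longrightarrow> is_psdo (psdo_neg P)"
  unfolding is_psdo_iff smooth_coeffs_def using ord_le_neg by (auto intro: smooth_minus simp: psdo_neg_def)

lemma psdo_mult_neg_left:
  assumes "is_psdo P" "is_psdo Q"
  shows "psdo_neg P \<odot> Q = psdo_neg (P \<odot> Q)"
proof (intro ext)
  fix n x
  obtain N M where o: "ord_le P N" "ord_le Q M"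
    using assms unfolding is_psdo_iff by blast
  have "mult_terms (psdo_neg P) Q n x = (\<lambda>z. - mult_terms P Q n x z)"
    by (auto simp: mult_terms_def psdo_neg_def fun_eq_iff)
  then show "(psdo_neg P \<odot> Q) n x = psdo_neg (P \<odot> Q) n x"
    unfolding psdo_mult_eq_Sum_any[OF ord_le_neg[OF o(1)] o(2)]
    by (simp add: psdo_mult_eq_Sum_any[OF o] Sum_any_uminus psdo_neg_def)
qed

lemma psdo_mult_neg_right:
  assumes "is_psdo P" "is_psdo Q"
  shows "P \<odot> psdo_neg Q = psdo_neg (P \<odot> Q)"
proof (intro ext)
  fix n x
  obtain N M where o: "ord_le P N" "ord_le Q M" and s: "smooth_coeffs Q"
    using assms unfolding is_psdo_iff by blast
  have "(deriv^^k) (psdo_neg Q j) = (\<lambda>x. - (deriv^^k) (Q j) x)" for k j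
    using s deriv_iter_minus by (simp add: psdo_neg_def smooth_coeffs_def)
  then have "mult_terms P (psdo_neg Q) n x = (\<lambda>z. - mult_terms P Q n x z)"
    by (auto simp: mult_terms_def fun_eq_iff)
  then show "(P \<odot> psdo_neg Q) n x = psdo_neg (P \<odot> Q) n x"
    unfolding psdo_mult_eq_Sum_any[OF o(1) ord_le_neg[OF o(2)]]
    by (simp add: psdo_mult_eq_Sum_any[OF o] Sum_any_uminus psdo_neg_def)
qed

lemma psdo_adj_dpow1: "psdo_adj (dpow 1) = psdo_neg (dpow 1)"
  by (simp add: psdo_adj_dpow psdo_neg_def)

definition psdo_add :: "psdo \<Rightarrow> psdo \<Rightarrow> psdo" where
  "psdo_add P Q = (\<lambda>n x. P n x + Q n x)"

lemma psdo_mult_add_left: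
  assumes "ord_le P N" "ord_le P' N" "ord_le Q M"
  shows "psdo_add P P' \<odot> Q = psdo_add (P \<odot> Q) (P' \<odot> Q)"
proof (intro ext)
  fix n x
  have o: "ord_le (psdo_add P P') N" using assms(1,2) by (simp add: ord_le_def psdo_add_def)
  have "mult_terms (psdo_add P P') Q n x = (\<lambda>z. mult_terms P Q n x z + mult_terms P' Q n x z)"
    by (auto simp: mult_terms_def psdo_add_def fun_eq_iff algebra_simps)
  then show "(psdo_add P P' \<odot> Q) n x = psdo_add (P \<odot> Q) (P' \<odot> Q) n x"
    unfolding psdo_mult_eq_Sum_any[OF o assms(3)]
    by (simp add: psdo_mult_eq_Sum_any[OF assms(1,3)] psdo_mult_eq_Sum_any[OF assms(2,3)]
        Sum_any.distrib[OF finite_mult_terms[OF assms(1,3)] finite_mult_terms[OF assms(2,3)]] psdo_add_def)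
qed

definition const_coeffs :: "psdo \<Rightarrow> bool" where
  "const_coeffs P \<longleftrightarrow> (\<forall>n. \<exists>c. P n = (\<lambda>_. c))"

lemma const_coeffs_deriv_iter: "const_coeffs P \<Longrightarrow> k \<noteq> 0 \<Longrightarrow> (deriv^^k) (P n) = (\<lambda>_. 0)"
  unfolding const_coeffs_def by (metis deriv_iter_const not0_implies_Suc)

lemma psdo_mult_const_right:
  assumes "ord_le P N" "ord_le Q M" "const_coeffs Q"
  shows "(P \<odot> Q) n x = Sum_any (\<lambda>i. P i x * Q (n - i) x)"
proof -
  have "(P \<odot> Q) n x = Sum_any (mult_terms P Q n x \<circ> (\<lambda>i. (i, 0)))"
    unfolding psdo_mult_eq_Sum_any[OF assms(1,2)]
  proof (rule Sum_any_reindex_inj)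
    show "z \<in> range (\<lambda>i. (i, 0))" if "mult_terms P Q n x z \<noteq> 0" for z
    proof (cases z)
      case (Pair i k)
      then have "k = 0"
        using that const_coeffs_deriv_iter[OF assms(3)] by (fastforce simp: mult_terms_def)
      then show ?thesis using Pair by auto
    qed
  qed (auto intro: injI)
  then show ?thesis by (simp add: mult_terms_def comp_def)
qed

lemma psdo_adj_const:
  assumes "ord_le P N" "const_coeffs P"
  shows "psdo_adj P n x = alt_sign n * P n x"
proof -
  have "Sum_any (adj_terms P n x) = sum (adj_terms P n x) {0}"
  proof (rule Sum_any.expand_superset)
    show "{k. adj_terms P n x k \<noteq> 0} \<subseteq> {0}"
      using const_coeffs_deriv_iter[OF assms(2)] by (fastforce simp: adj_terms_def)
  qed simp
  then show ?thesis by (simp add: psdo_adj_eq_Sum_any[OF assms(1)] adj_terms_def)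
qed

lemma commutes_dpow1_iff_const_coeffs:
  assumes "is_psdo B"
  shows "dpow 1 \<odot> B = B \<odot> dpow 1 \<longleftrightarrow> const_coeffs B"
proof -
  obtain N where o: "ord_le B N" and s: "smooth_coeffs B"
    using assms unfolding is_psdo_iff by blast
  have "dpow 1 \<odot> B = B \<odot> dpow 1 \<longleftrightarrow> (\<forall>n. deriv (B n) = (\<lambda>_. 0))"
    by (simp add: fun_eq_iff psdo_mult_dpow1_left[OF o] psdo_mult_dpow_right[OF o])
  also have "\<dots> \<longleftrightarrow> const_coeffs B"
    using s smooth_deriv_eq_0_imp_const const_coeffs_deriv_iter[of B 1]
    unfolding smooth_coeffs_def const_coeffs_def by (metis One_nat_def funpow_0 funpow_Suc_right o_apply one_neq_zero)
  finally show ?thesis .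
qed

lemma psdo_mult_lead_coeff:
  assumes "ord_le P a" "ord_le Q b"
  shows "(P \<odot> Q) (a + b) x = P a x * Q b x"
proof -
  have "Sum_any (mult_terms P Q (a + b) x) = sum (mult_terms P Q (a + b) x) {(a, 0)}"
    by (rule Sum_any.expand_superset) (auto dest: mult_terms_support[OF assms])
  then show ?thesis by (simp add: psdo_mult_eq_Sum_any[OF assms] mult_terms_def)
qed

lemma psdo_adj_lead_coeff: "ord_le P a \<Longrightarrow> psdo_adj P a x = alt_sign a * P a x"
  by (simp add: psdo_adj_eq_sum adj_terms_def)

definition monic :: "psdo \<Rightarrow> bool" where
  "monic P \<longleftrightarrow> ord_le P 0 \<and> smooth_coeffs P \<and> P 0 = (\<lambda>_. 1)"

lemma monic_is_psdo: "monic P \<Longrightarrow> is_psdo P"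
  unfolding monic_def is_psdo_iff by blast

lemma monic_mult: "monic P \<Longrightarrow> monic Q \<Longrightarrow> monic (P \<odot> Q)"
  unfolding monic_def using ord_le_mult[of P 0 Q 0] smooth_coeffs_mult psdo_mult_lead_coeff[of P 0 Q 0]
  by auto

section \<open>Inverses and dressing operators\<close>

lemma strong_recursion_exists:
  fixes G :: "(nat \<Rightarrow> 'a) \<Rightarrow> nat \<Rightarrow> 'a"
  assumes "\<And>f g m. (\<And>j. j < m \<Longrightarrow> f j = g j) \<Longrightarrow> G f m = G g m"
  shows "\<exists>f. \<forall>m. f m = G f m"
proof -
  have "wfrec less_than G m = G (wfrec less_than G) m" for m
  proof -
    have "wfrec less_than G m = G (cut (wfrec less_than G) less_than m) m" by (rule wfrec) simp
    also have "\<dots> = G (wfrec less_than G) m" by (rule assms) (simp add: cut_apply)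
    finally show ?thesis .
  qed
  then show ?thesis by blast
qed

definition lower_part :: "psdo \<Rightarrow> psdo" where
  "lower_part P = (\<lambda>i. if i < 0 then P i else (\<lambda>_. 0))"

lemma ord_le_lower_part: "ord_le (lower_part P) (-1)"
  unfolding ord_le_def lower_part_def by auto

lemma smooth_coeffs_lower_part: "smooth_coeffs P \<Longrightarrow> smooth_coeffs (lower_part P)"
  unfolding smooth_coeffs_def lower_part_def by auto

text \<open>The next lemma is what makes the recursive constructions below well founded.\<close>

lemma lower_part_mult_cong:
  assumes "ord_le Q 0" "ord_le Q' 0" "\<And>j. j < m \<Longrightarrow> Q (- int j) = Q' (- int j)"
  shows "(lower_part P \<odot> Q) (- int m) = (lower_part P \<odot> Q') (- int m)"
proof (intro ext)
  fix x
  have "Q (- int m + int k - i) = Q' (- int m + int k - i)" if "i < 0" for i k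
  proof (cases "- int m + int k - i \<le> 0")
    case True
    then have "nat (int m - int k + i) < m" "- int m + int k - i = - int (nat (int m - int k + i))"
      using that by auto
    then show ?thesis using assms(3) by metis
  qed (use assms(1,2) in \<open>auto simp: ord_le_def\<close>)
  then have "mult_terms (lower_part P) Q (- int m) x z = mult_terms (lower_part P) Q' (- int m) x z" for z
    by (cases z) (auto simp: mult_terms_def lower_part_def)
  then show "(lower_part P \<odot> Q) (- int m) x = (lower_part P \<odot> Q') (- int m) x"
    by (simp add: psdo_mult_eq_Sum_any[OF ord_le_lower_part assms(1)]
        psdo_mult_eq_Sum_any[OF ord_le_lower_part assms(2)])
qed

lemma smooth_lower_part_mult:
  assumes "smooth_coeffs P" "ord_le Q 0" "\<And>j. j < m \<Longrightarrow> smooth (Q (- int j))"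
  shows "smooth ((lower_part P \<odot> Q) (- int m))"
proof -
  define Q' where "Q' = (\<lambda>i. if - int m < i then Q i else (\<lambda>_. 0))"
  have o: "ord_le Q' 0" using assms(2) by (simp add: Q'_def ord_le_def)
  have "smooth (Q' i)" for i
  proof (cases "- int m < i \<and> i \<le> 0")
    case True
    then have "Q' i = Q (- int (nat (- i)))" "nat (- i) < m" by (auto simp: Q'_def)
    then show ?thesis using assms(3) by metis
  next
    case False
    then have "Q' i = (\<lambda>_. 0)" using assms(2) by (auto simp: Q'_def ord_le_def)
    then show ?thesis by simp
  qed
  then have "smooth_coeffs Q'" by (simp add: smooth_coeffs_def)
  moreover have "(lower_part P \<odot> Q) (- int m) = (lower_part P \<odot> Q') (- int m)"
    by (rule lower_part_mult_cong[OF assms(2) o]) (simp add: Q'_def)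
  ultimately show ?thesis
    using smooth_coeffs_mult[OF ord_le_lower_part o smooth_coeffs_lower_part[OF assms(1)]]
    by (simp add: smooth_coeffs_def)
qed

definition psdo_of_seq :: "(nat \<Rightarrow> real \<Rightarrow> real) \<Rightarrow> psdo" where
  "psdo_of_seq f = (\<lambda>j. if j \<le> 0 then f (nat (- j)) else (\<lambda>_. 0))"

lemma ord_le_psdo_of_seq: "ord_le (psdo_of_seq f) 0"
  unfolding ord_le_def psdo_of_seq_def by auto

lemma psdo_of_seq_nonpos [simp]: "psdo_of_seq f (- int j) = f j"
  by (simp add: psdo_of_seq_def)

lemma psdo_of_seq_zero [simp]: "psdo_of_seq f 0 = f 0"
  by (simp add: psdo_of_seq_def)

lemma lower_part_recursion:
  assumes "smooth_coeffs P" "\<And>m s. smooth s \<Longrightarrow> smooth (H m s)"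
  shows "\<exists>f. (\<forall>m. f m = H m ((lower_part P \<odot> psdo_of_seq f) (- int m))) \<and> (\<forall>m. smooth (f m))"
proof -
  let ?G = "\<lambda>f m. H m ((lower_part P \<odot> psdo_of_seq f) (- int m))"
  have "\<exists>f. \<forall>m. f m = ?G f m"
  proof (rule strong_recursion_exists)
    fix f g :: "nat \<Rightarrow> real \<Rightarrow> real" and m assume "\<And>j. j < m \<Longrightarrow> f j = g j"
    then have "(lower_part P \<odot> psdo_of_seq f) (- int m)
        = (lower_part P \<odot> psdo_of_seq g) (- int m)"
      by (intro lower_part_mult_cong[OF ord_le_psdo_of_seq ord_le_psdo_of_seq]) simp
    then show "?G f m = ?G g m" by simp
  qed
  then obtain f where f: "\<And>m. f m = ?G f m" by blast
  have "smooth (f m)" for m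
  proof (induction m rule: less_induct)
    case (less m)
    then have "smooth ((lower_part P \<odot> psdo_of_seq f) (- int m))"
      by (intro smooth_lower_part_mult[OF assms(1) ord_le_psdo_of_seq]) simp
    then show ?case by (subst f) (rule assms(2))
  qed
  with f show ?thesis by blast
qed

lemma lower_part_mult_nonneg:
  "ord_le Q 0 \<Longrightarrow> 0 \<le> n \<Longrightarrow> (lower_part P \<odot> Q) n x = 0"
  using ord_le_mult[OF ord_le_lower_part, of Q 0 P] by (simp add: ord_le_vanishes)

lemma smooth_coeffs_psdo_of_seq: "(\<And>m. smooth (f m)) \<Longrightarrow> smooth_coeffs (psdo_of_seq f)"
  unfolding smooth_coeffs_def psdo_of_seq_def by auto

lemma psdo_of_seq_cases:
  obtains m where "n = - int m" | "0 < n" "psdo_of_seq f n = (\<lambda>_. 0)"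
proof (cases "0 < n")
  case False
  then have "n = - int (nat (- n))" by simp
  then show ?thesis using that(1) by blast
qed (simp add: that(2) psdo_of_seq_def)

lemma monic_mult_coeff:
  assumes "monic P" "ord_le V 0"
  shows "(P \<odot> V) n x = V n x + (lower_part P \<odot> V) n x"
proof -
  have "P = psdo_add (dpow 0) (lower_part P)"
    using assms(1) ord_le_vanishes[of P 0]
    by (auto simp: fun_eq_iff monic_def psdo_add_def dpow_def lower_part_def)
  then have "P \<odot> V = psdo_add (dpow 0) (lower_part P) \<odot> V" by (rule arg_cong)
  also have "\<dots> = psdo_add (dpow 0 \<odot> V) (lower_part P \<odot> V)"
    by (rule psdo_mult_add_left[OF ord_le_dpow ord_le_mono[OF ord_le_lower_part] assms(2)]) simp
  finally have "P \<odot> V = psdo_add (dpow 0 \<odot> V) (lower_part P \<odot> V)" .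
  then show ?thesis by (simp add: psdo_add_def psdo_mult_dpow0_left[OF assms(2)])
qed

lemma lax_mult_coeff:
  assumes "ord_le L 1" "L 1 = (\<lambda>_. 1)" "L 0 = (\<lambda>_. 0)" "ord_le W 0"
  shows "(L \<odot> W) n x = W (n - 1) x + deriv (W n) x + (lower_part L \<odot> W) n x"
proof -
  have "L = psdo_add (dpow 1) (lower_part L)"
  proof (intro ext)
    fix n x
    show "L n x = psdo_add (dpow 1) (lower_part L) n x"
      using assms(1-3) ord_le_vanishes[of L 1 n x]
      by (cases "n < 0 \<or> n = 0 \<or> n = 1") (auto simp: psdo_add_def dpow_def lower_part_def)
  qed
  then have "L \<odot> W = psdo_add (dpow 1) (lower_part L) \<odot> W" by (rule arg_cong)
  also have "\<dots> = psdo_add (dpow 1 \<odot> W) (lower_part L \<odot> W)"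
    by (rule psdo_mult_add_left[OF ord_le_dpow ord_le_mono[OF ord_le_lower_part] assms(4)]) simp
  finally have "L \<odot> W = psdo_add (dpow 1 \<odot> W) (lower_part L \<odot> W)" .
  then show ?thesis by (simp add: psdo_add_def psdo_mult_dpow1_left[OF assms(4)])
qed

lemma monic_right_inverse_exists:
  assumes "monic P"
  shows "\<exists>V. monic V \<and> P \<odot> V = dpow 0"
proof -
  have sP: "smooth_coeffs P" using assms by (simp add: monic_def)
  obtain f where f: "\<And>m. f m = (if m = 0 then (\<lambda>_. 1)
      else (\<lambda>x. - (lower_part P \<odot> psdo_of_seq f) (- int m) x))" and sf: "\<And>m. smooth (f m)"
  proof -
    have "smooth (if m = 0 then (\<lambda>_. 1) else (\<lambda>x. - s x))" if "smooth s" for m and s :: "real \<Rightarrow> real"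
      using that by (simp add: smooth_minus)
    from lower_part_recursion[where H="\<lambda>m s. if m = 0 then (\<lambda>_. 1) else (\<lambda>x. - s x)", OF sP this]
    show ?thesis using that by blast
  qed
  define V where "V = psdo_of_seq f"
  have oV: "ord_le V 0" by (simp add: V_def ord_le_psdo_of_seq)
  have "V n x + (lower_part P \<odot> V) n x = dpow 0 n x" for n x
  proof (cases n rule: psdo_of_seq_cases[where f=f])
    case (1 m)
    then show ?thesis using f[of m] lower_part_mult_nonneg[OF oV, of 0 P x] by (auto simp: V_def dpow_def)
  next
    case 2
    then show ?thesis using lower_part_mult_nonneg[OF oV, of n P x] by (simp add: V_def dpow_def)
  qed
  then have "P \<odot> V = dpow 0" by (intro ext) (simp add: monic_mult_coeff[OF assms oV])
  moreover have "monic V"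
    using f[of 0] sf by (simp add: monic_def V_def ord_le_psdo_of_seq smooth_coeffs_psdo_of_seq)
  ultimately show ?thesis by blast
qed

lemma monic_inverse_exists:
  assumes "monic P"
  shows "\<exists>V. monic V \<and> P \<odot> V = dpow 0 \<and> V \<odot> P = dpow 0"
proof -
  obtain V where V: "monic V" "P \<odot> V = dpow 0"
    using monic_right_inverse_exists[OF assms] by blast
  obtain V' where V': "monic V'" "V \<odot> V' = dpow 0"
    using monic_right_inverse_exists[OF V(1)] by blast
  have ps: "is_psdo P" "is_psdo V" "is_psdo V'" using assms V V' by (simp_all add: monic_is_psdo)
  have "P = P \<odot> (V \<odot> V')" by (simp add: V'(2) psdo_mult_one_right ps)
  also have "\<dots> = V'" by (simp add: psdo_mult_assoc[symmetric] V(2) psdo_mult_one_left ps)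
  finally show ?thesis using V V' by blast
qed

lemma dressing_exists:
  assumes L: "ord_le L 1" "smooth_coeffs L" "L 1 = (\<lambda>_. 1)" "L 0 = (\<lambda>_. 0)"
  shows "\<exists>W. monic W \<and> L \<odot> W = W \<odot> dpow 1"
proof -
  obtain f where f: "\<And>m. f m = (if m = 0 then (\<lambda>_. 1)
      else antideriv (\<lambda>x. - (lower_part L \<odot> psdo_of_seq f) (- int m) x))"
    and sf: "\<And>m. smooth (f m)"
  proof -
    have "smooth (if m = 0 then (\<lambda>_. 1) else antideriv (\<lambda>x. - s x))" if "smooth s" for m s
      using that by (simp add: smooth_antideriv smooth_minus)
    from lower_part_recursion[where H="\<lambda>m s. if m = 0 then (\<lambda>_. 1) else antideriv (\<lambda>x. - s x)",
        OF L(2) this]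
    show ?thesis using that by blast
  qed
  define W where "W = psdo_of_seq f"
  have oW: "ord_le W 0" by (simp add: W_def ord_le_psdo_of_seq)
  have "deriv (W n) x + (lower_part L \<odot> W) n x = 0" for n x
  proof (cases n rule: psdo_of_seq_cases[where f=f])
    case (1 m)
    have "smooth (\<lambda>x. - (lower_part L \<odot> psdo_of_seq f) (- int m) x)"
      using sf by (intro smooth_minus smooth_lower_part_mult[OF L(2) ord_le_psdo_of_seq]) simp
    then show ?thesis
      using f[of m] lower_part_mult_nonneg[OF oW, of 0 L x] deriv_iter_const[of 0 1]
      by (cases "m = 0") (simp_all add: W_def 1 deriv_antideriv)
  next
    case 2
    then show ?thesis
      using lower_part_mult_nonneg[OF oW, of n L x] deriv_iter_const[of 0 0] by (simp add: W_def)
  qed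
  then have "L \<odot> W = W \<odot> dpow 1"
    by (intro ext) (simp add: lax_mult_coeff[OF L(1,3,4) oW] psdo_mult_dpow_right[OF oW])
  moreover have "monic W"
    using f[of 0] sf by (simp add: monic_def W_def ord_le_psdo_of_seq smooth_coeffs_psdo_of_seq)
  ultimately show ?thesis by blast
qed

lemma dressing_conjugation_exists:
  assumes L: "ord_le L 1" "smooth_coeffs L" "L 1 = (\<lambda>_. 1)" "L 0 = (\<lambda>_. 0)"
  shows "\<exists>W V. monic W \<and> is_psdo V \<and> W \<odot> V = dpow 0 \<and> V \<odot> W = dpow 0 \<and> L = W \<odot> (dpow 1 \<odot> V)"
proof -
  obtain W where W: "monic W" "L \<odot> W = W \<odot> dpow 1"
    using dressing_exists[OF L] by blast
  obtain V where V: "monic V" "W \<odot> V = dpow 0" "V \<odot> W = dpow 0"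
    using monic_inverse_exists[OF W(1)] by blast
  have ps: "is_psdo L" "is_psdo W" "is_psdo V"
    using L(1,2) monic_is_psdo[OF W(1)] monic_is_psdo[OF V(1)] unfolding is_psdo_iff by blast+
  have "L = (L \<odot> W) \<odot> V"
    using ps by (simp add: psdo_mult_assoc V(2) psdo_mult_one_right)
  then have "L = W \<odot> (dpow 1 \<odot> V)"
    using ps by (simp add: W(2) psdo_mult_assoc is_psdo_dpow)
  then show ?thesis using W(1) V ps(3) by blast
qed

section \<open>Normalising the dressing operator\<close>

text \<open>The \<open>c\<^sub>m\<close> are the coefficients of \<open>C = \<Sum>\<^sub>m c\<^sub>m \<partial>\<^sup>-\<^sup>m\<close> with constant \<open>c\<^sub>m\<close>, and the sum is the
  coefficient of \<open>\<partial>\<^sup>1\<^sup>-\<^sup>m\<close> in \<open>C\<^sup>* \<partial> C\<close>.\<close>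

lemma alternating_square_root_exists:
  fixes \<beta> :: "nat \<Rightarrow> real"
  assumes \<beta>0: "\<beta> 0 = 1" and \<beta>_odd: "\<And>m. odd m \<Longrightarrow> \<beta> m = 0"
  shows "\<exists>c. c 0 = 1 \<and> (\<forall>m. (\<Sum>a\<le>m. (-1)^a * c a * c (m - a)) = \<beta> m)"
proof -
  define inner where "inner = (\<lambda>(c::nat \<Rightarrow> real) m. \<Sum>a\<in>{1..<m}. (-1)^a * c a * c (m - a))"
  have "\<exists>c. \<forall>m. c m = (if m = 0 then 1 else if odd m then 0 else (\<beta> m - inner c m) / 2)"
  proof (rule strong_recursion_exists)
    fix f g :: "nat \<Rightarrow> real" and m assume "\<And>j. j < m \<Longrightarrow> f j = g j"
    then have "inner f m = inner g m" unfolding inner_def by (intro sum.cong) auto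
    then show "(if m = 0 then 1 else if odd m then 0 else (\<beta> m - inner f m) / 2)
      = (if m = 0 then 1 else if odd m then 0 else (\<beta> m - inner g m) / 2)" by simp
  qed
  then obtain c where c: "\<And>m. c m = (if m = 0 then 1 else if odd m then 0 else (\<beta> m - inner c m) / 2)"
    by blast
  have c_odd: "c m = 0" if "odd m" for m
    using c[of m] that by (metis odd_pos neq0_conv)
  have "(\<Sum>a\<le>m. (-1)^a * c a * c (m - a)) = \<beta> m" for m
  proof (cases "odd m")
    case True
    have "(-1)^a * c a * c (m - a) = 0" if "a \<le> m" for a
      using \<open>odd m\<close> that c_odd by (cases "odd a") auto
    then show ?thesis using \<beta>_odd[OF True] by (simp add: sum.neutral)
  next
    case False
    show ?thesis
    proof (cases "m = 0")
      case True then show ?thesis using c[of 0] \<beta>0 by simp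
    next
      case m: False
      have "{..m} = insert 0 (insert m {1..<m})" using m by auto
      then have "(\<Sum>a\<le>m. (-1)^a * c a * c (m - a)) = 2 * c m + inner c m"
        using m False c[of 0] by (simp add: inner_def)
      then show ?thesis using c[of m] m False by (simp add: field_simps)
    qed
  qed
  then show ?thesis using c[of 0] by auto
qed

lemma const_coeffs_psdo_of_seq: "const_coeffs (psdo_of_seq (\<lambda>m _. c m))"
  by (auto simp: const_coeffs_def psdo_of_seq_def)

lemma psdo_of_seq_const_conj_dpow1_coeff:
  fixes c :: "nat \<Rightarrow> real"
  defines "C \<equiv> psdo_of_seq (\<lambda>m _. c m)"
  shows "(psdo_adj C \<odot> (dpow 1 \<odot> C)) (1 - int m) x = (\<Sum>a\<le>m. (-1)^a * c a * c (m - a))"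
proof -
  have oC: "ord_le C 0" and cC: "const_coeffs C"
    by (simp_all add: C_def ord_le_psdo_of_seq const_coeffs_psdo_of_seq)
  have D: "dpow 1 \<odot> C = (\<lambda>n. C (n - 1))"
    using const_coeffs_deriv_iter[OF cC, of 1] by (simp add: fun_eq_iff psdo_mult_dpow1_left[OF oC])
  have cD: "const_coeffs (dpow 1 \<odot> C)"
    using cC by (simp add: D const_coeffs_def)
  have "(psdo_adj C \<odot> (dpow 1 \<odot> C)) (1 - int m) x = Sum_any (\<lambda>i. alt_sign i * C i x * C (- i - int m) x)"
    unfolding psdo_mult_const_right[OF ord_le_adj[OF oC] ord_le_mult[OF ord_le_dpow oC] cD]
    by (simp add: psdo_adj_const[OF oC cC] D algebra_simps)
  also have "\<dots> = Sum_any (\<lambda>a. if a \<in> {..m} then (-1)^a * c a * c (m - a) else 0)"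
  proof (rule Sum_any_reindex_inj[of "\<lambda>a. - int a", unfolded comp_def, THEN trans])
    show "inj (\<lambda>a::nat. - int a)" by (auto intro: injI)
    show "i \<in> range (\<lambda>a. - int a)" if "alt_sign i * C i x * C (- i - int m) x \<noteq> 0" for i
      using that ord_le_nonzero[OF oC, of i x] by (auto simp: image_iff intro!: exI[of _ "nat (- i)"])
    have "C (int a - int m) x = (if a \<le> m then c (m - a) else 0)" for a
      by (auto simp: C_def psdo_of_seq_def nat_diff_distrib)
    then show "Sum_any (\<lambda>a. alt_sign (- int a) * C (- int a) x * C (- (- int a) - int m) x)
        = Sum_any (\<lambda>a. if a \<in> {..m} then (-1)^a * c a * c (m - a) else 0)"
      by (intro Sum_any.cong) (simp add: C_def power_int_minus_one_minus)
  qed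
  also have "\<dots> = (\<Sum>a\<le>m. (-1)^a * c a * c (m - a))"
    by (rule Sum_any.conditionalize[symmetric]) simp
  finally show ?thesis .
qed

lemma const_coeffs_square_root_exists:
  assumes B: "ord_le B 1" "const_coeffs B" "B 1 = (\<lambda>_. 1)" "\<And>n. even n \<Longrightarrow> B n = (\<lambda>_. 0)"
  shows "\<exists>C. monic C \<and> const_coeffs C \<and> psdo_adj C \<odot> (dpow 1 \<odot> C) = B"
proof -
  obtain c where c0: "c 0 = 1" and c: "\<And>m. (\<Sum>a\<le>m. (-1)^a * c a * c (m - a)) = B (1 - int m) 0"
    using alternating_square_root_exists[of "\<lambda>m. B (1 - int m) 0"] B(3,4) by force
  define C where "C = psdo_of_seq (\<lambda>m _. c m)"
  have oC: "ord_le C 0" by (simp add: C_def ord_le_psdo_of_seq)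
  have "(psdo_adj C \<odot> (dpow 1 \<odot> C)) n x = B n x" for n x
  proof (cases "1 < n")
    case True
    then show ?thesis
      using ord_le_vanishes[OF ord_le_mult[OF ord_le_adj[OF oC] ord_le_mult[OF ord_le_dpow[of 1] oC]], of n x]
        ord_le_vanishes[OF B(1), of n x] by simp
  next
    case False
    then have n: "n = 1 - int (nat (1 - n))" by simp
    show ?thesis
      using B(2) c[of "nat (1 - n)"] psdo_of_seq_const_conj_dpow1_coeff[of c "nat (1 - n)" x]
      unfolding const_coeffs_def C_def by (metis n)
  qed
  moreover have "monic C" using c0 by (simp add: monic_def C_def ord_le_psdo_of_seq smooth_coeffs_psdo_of_seq)
  ultimately show ?thesis unfolding C_def using const_coeffs_psdo_of_seq by blast
qed

lemmas is_psdo_closed = is_psdo_mult is_psdo_adj is_psdo_neg is_psdo_dpow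

lemma dpow_mult_dpow_mult: "is_psdo P \<Longrightarrow> dpow m \<odot> (dpow k \<odot> P) = dpow (m + k) \<odot> P"
  by (simp add: psdo_mult_assoc[symmetric] dpow_mult_dpow is_psdo_dpow)

lemma psdo_adj_one: "psdo_adj (dpow 0) = dpow 0"
  by (simp add: psdo_adj_dpow)

lemma conj_dpow1_skew_adjoint:
  assumes "is_psdo W"
  shows "psdo_adj (psdo_adj W \<odot> (dpow 1 \<odot> W)) = psdo_neg (psdo_adj W \<odot> (dpow 1 \<odot> W))"
  using assms
  by (simp add: psdo_adj_mult psdo_adj_adj psdo_adj_dpow1 psdo_mult_neg_left psdo_mult_neg_right
      psdo_mult_assoc is_psdo_closed)

lemma conj_dpow1_lead_coeff:
  assumes "monic W"
  shows "ord_le (psdo_adj W \<odot> (dpow 1 \<odot> W)) 1" "(psdo_adj W \<odot> (dpow 1 \<odot> W)) 1 = (\<lambda>_. 1)"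
proof -
  have W: "ord_le W 0" "W 0 = (\<lambda>_. 1)" using assms by (simp_all add: monic_def)
  show "ord_le (psdo_adj W \<odot> (dpow 1 \<odot> W)) 1"
    using ord_le_mult[OF ord_le_adj[OF W(1)] ord_le_mult[OF ord_le_dpow W(1)]] by simp
  show "(psdo_adj W \<odot> (dpow 1 \<odot> W)) 1 = (\<lambda>_. 1)"
    using psdo_mult_lead_coeff[OF ord_le_adj[OF W(1)] ord_le_mult[OF ord_le_dpow W(1)]]
      psdo_mult_lead_coeff[OF ord_le_dpow[of 1] W(1)] psdo_adj_lead_coeff[OF W(1)] W(2)
    by (simp add: fun_eq_iff dpow_def)
qed

lemma const_coeffs_skew_adjoint_even:
  assumes "ord_le B N" "const_coeffs B" "psdo_adj B = psdo_neg B" "even n"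
  shows "B n = (\<lambda>_. 0)"
proof
  fix x
  have "- B n x = B n x"
    using psdo_adj_const[OF assms(1,2), of n x] assms(3,4) by (simp add: psdo_neg_def)
  then show "B n x = 0" by simp
qed

lemma dressed_adj_conj_commutes_dpow1:
  assumes W: "is_psdo W" and V: "is_psdo V" and VW: "V \<odot> W = dpow 0"
    and L: "L = W \<odot> (dpow 1 \<odot> V)" and adj: "psdo_adj L = psdo_neg (dpow 1 \<odot> (L \<odot> dpow (-1)))"
  shows "dpow 1 \<odot> (psdo_adj W \<odot> (dpow 1 \<odot> W)) = (psdo_adj W \<odot> (dpow 1 \<odot> W)) \<odot> dpow 1"
proof -
  txt \<open>Taking adjoints in \<open>L = W \<partial> V\<close> turns the hypothesis into \<open>\<partial> W\<^sup>* = W\<^sup>* \<partial> L \<partial>\<^sup>-\<^sup>1\<close>.\<close>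
  have "psdo_adj L = psdo_neg (psdo_adj V \<odot> (dpow 1 \<odot> psdo_adj W))"
    using W V by (simp add: L psdo_adj_mult psdo_adj_dpow1 psdo_mult_neg_left psdo_mult_neg_right
        psdo_mult_assoc is_psdo_closed)
  then have adj_eq: "psdo_adj V \<odot> (dpow 1 \<odot> psdo_adj W) = dpow 1 \<odot> (W \<odot> (dpow 1 \<odot> (V \<odot> dpow (-1))))"
    using adj W V by (metis L psdo_neg_neg psdo_mult_assoc is_psdo_closed)
  have adj_inv: "psdo_adj W \<odot> psdo_adj V = dpow 0"
    using psdo_adj_mult[OF V W] by (simp add: VW psdo_adj_one)
  have "dpow 1 \<odot> psdo_adj W = psdo_adj W \<odot> (psdo_adj V \<odot> (dpow 1 \<odot> psdo_adj W))"
    using W V by (simp add: psdo_mult_assoc[symmetric] adj_inv psdo_mult_one_left is_psdo_closed)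
  also have "\<dots> = psdo_adj W \<odot> (dpow 1 \<odot> (W \<odot> (dpow 1 \<odot> (V \<odot> dpow (-1)))))"
    by (simp only: adj_eq)
  finally have deriv_adj: "dpow 1 \<odot> psdo_adj W = psdo_adj W \<odot> (dpow 1 \<odot> (W \<odot> (dpow 1 \<odot> (V \<odot> dpow (-1)))))" .
  have "dpow 1 \<odot> (psdo_adj W \<odot> (dpow 1 \<odot> W)) = (dpow 1 \<odot> psdo_adj W) \<odot> (dpow 1 \<odot> W)"
    using W by (simp add: psdo_mult_assoc is_psdo_closed)
  also have "\<dots> = psdo_adj W \<odot> (dpow 1 \<odot> (W \<odot> (dpow 1 \<odot> (V \<odot> (dpow (-1) \<odot> (dpow 1 \<odot> W))))))"
    unfolding deriv_adj using W V by (simp add: psdo_mult_assoc is_psdo_closed)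
  also have "\<dots> = (psdo_adj W \<odot> (dpow 1 \<odot> W)) \<odot> dpow 1"
    using W V by (simp add: dpow_mult_dpow_mult VW psdo_mult_one_left psdo_mult_one_right psdo_mult_assoc
        is_psdo_closed)
  finally show ?thesis .
qed

lemma commutes_with_inverse:
  assumes "is_psdo A" "is_psdo C" "is_psdo Ci" "C \<odot> Ci = dpow 0" "Ci \<odot> C = dpow 0" "C \<odot> A = A \<odot> C"
  shows "Ci \<odot> A = A \<odot> Ci"
proof -
  have "Ci \<odot> A = Ci \<odot> ((A \<odot> C) \<odot> Ci)"
    using assms by (simp add: psdo_mult_assoc psdo_mult_one_right is_psdo_closed)
  also have "\<dots> = Ci \<odot> ((C \<odot> A) \<odot> Ci)" by (simp only: assms(6))
  also have "\<dots> = A \<odot> Ci"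
    using assms(1-5) by (simp add: psdo_mult_assoc[symmetric] psdo_mult_one_left is_psdo_closed)
  finally show ?thesis .
qed

lemma dressed_conj_dpow1_odd_const:
  assumes W0: "monic W0" and V0: "is_psdo V0" "V0 \<odot> W0 = dpow 0"
    and L: "L = W0 \<odot> (dpow 1 \<odot> V0)" and adj: "psdo_adj L = psdo_neg (dpow 1 \<odot> (L \<odot> dpow (-1)))"
  defines "B \<equiv> psdo_adj W0 \<odot> (dpow 1 \<odot> W0)"
  shows "ord_le B 1" "const_coeffs B" "B 1 = (\<lambda>_. 1)" "\<And>n. even n \<Longrightarrow> B n = (\<lambda>_. 0)"
proof -
  have pW0: "is_psdo W0" using W0 by (rule monic_is_psdo)
  show "ord_le B 1" "B 1 = (\<lambda>_. 1)"
    using conj_dpow1_lead_coeff[OF W0] by (simp_all add: B_def)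
  show "const_coeffs B"
    using dressed_adj_conj_commutes_dpow1[OF pW0 V0 L adj] commutes_dpow1_iff_const_coeffs
    by (simp add: B_def pW0 is_psdo_closed)
  show "B n = (\<lambda>_. 0)" if "even n" for n
    using const_coeffs_skew_adjoint_even[OF \<open>ord_le B 1\<close> \<open>const_coeffs B\<close> _ that]
      conj_dpow1_skew_adjoint[OF pW0] by (simp add: B_def)
qed

lemma renormalise_dressing:
  assumes ps: "is_psdo W0" "is_psdo V0" "is_psdo C" "is_psdo Ci"
    and inv: "W0 \<odot> V0 = dpow 0" "V0 \<odot> W0 = dpow 0" "C \<odot> Ci = dpow 0" "Ci \<odot> C = dpow 0"
    and comm: "C \<odot> dpow 1 = dpow 1 \<odot> C"
    and conj: "psdo_adj C \<odot> (dpow 1 \<odot> C) = psdo_adj W0 \<odot> (dpow 1 \<odot> W0)"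
  shows "(W0 \<odot> Ci) \<odot> (C \<odot> V0) = dpow 0" "(C \<odot> V0) \<odot> (W0 \<odot> Ci) = dpow 0"
    and "W0 \<odot> (dpow 1 \<odot> V0) = (W0 \<odot> Ci) \<odot> (dpow 1 \<odot> (C \<odot> V0))"
    and "psdo_adj (W0 \<odot> Ci) \<odot> (dpow 1 \<odot> (W0 \<odot> Ci)) = dpow 1"
proof -
  show "(W0 \<odot> Ci) \<odot> (C \<odot> V0) = dpow 0" "(C \<odot> V0) \<odot> (W0 \<odot> Ci) = dpow 0"
    using ps inv by (simp_all add: psdo_mult_assoc[symmetric] psdo_mult_one_right is_psdo_closed,
        simp_all add: psdo_mult_assoc psdo_mult_one_left is_psdo_closed)
  have CiD: "Ci \<odot> dpow 1 = dpow 1 \<odot> Ci"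
    using commutes_with_inverse[OF is_psdo_dpow ps(3,4) inv(3,4) comm] .
  have "W0 \<odot> (dpow 1 \<odot> V0) = W0 \<odot> (dpow 1 \<odot> ((Ci \<odot> C) \<odot> V0))"
    by (simp add: inv(4) psdo_mult_one_left ps)
  also have "\<dots> = W0 \<odot> ((dpow 1 \<odot> Ci) \<odot> (C \<odot> V0))"
    using ps by (simp add: psdo_mult_assoc is_psdo_closed)
  also have "\<dots> = (W0 \<odot> Ci) \<odot> (dpow 1 \<odot> (C \<odot> V0))"
    using ps by (simp add: CiD[symmetric] psdo_mult_assoc is_psdo_closed)
  finally show "W0 \<odot> (dpow 1 \<odot> V0) = (W0 \<odot> Ci) \<odot> (dpow 1 \<odot> (C \<odot> V0))" .
  have adjCCi: "psdo_adj Ci \<odot> psdo_adj C = dpow 0"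
    using psdo_adj_mult[OF ps(3,4)] inv(3) by (simp add: psdo_adj_one)
  have "psdo_adj (W0 \<odot> Ci) \<odot> (dpow 1 \<odot> (W0 \<odot> Ci)) = psdo_adj Ci \<odot> ((psdo_adj W0 \<odot> (dpow 1 \<odot> W0)) \<odot> Ci)"
    using ps by (simp add: psdo_adj_mult psdo_mult_assoc is_psdo_closed)
  also have "\<dots> = (psdo_adj Ci \<odot> psdo_adj C) \<odot> (dpow 1 \<odot> (C \<odot> Ci))"
    using ps by (simp add: conj[symmetric] psdo_mult_assoc is_psdo_closed)
  also have "\<dots> = dpow 1"
    by (simp add: adjCCi inv(3) psdo_mult_one_left psdo_mult_one_right is_psdo_dpow)
  finally show "psdo_adj (W0 \<odot> Ci) \<odot> (dpow 1 \<odot> (W0 \<odot> Ci)) = dpow 1" .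
qed

lemma normalised_dressing_exists:
  assumes W0: "monic W0" and V0: "is_psdo V0" "W0 \<odot> V0 = dpow 0" "V0 \<odot> W0 = dpow 0"
    and L: "L = W0 \<odot> (dpow 1 \<odot> V0)" and adj: "psdo_adj L = psdo_neg (dpow 1 \<odot> (L \<odot> dpow (-1)))"
  shows "\<exists>W Winv. monic W \<and> is_psdo Winv \<and> W \<odot> Winv = dpow 0 \<and> Winv \<odot> W = dpow 0
    \<and> L = W \<odot> (dpow 1 \<odot> Winv) \<and> psdo_adj W \<odot> (dpow 1 \<odot> W) = dpow 1"
proof -
  obtain C where C: "monic C" "const_coeffs C" "psdo_adj C \<odot> (dpow 1 \<odot> C) = psdo_adj W0 \<odot> (dpow 1 \<odot> W0)"
    using const_coeffs_square_root_exists dressed_conj_dpow1_odd_const[OF W0 V0(1,3) L adj] by metis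
  obtain Ci where Ci: "monic Ci" "C \<odot> Ci = dpow 0" "Ci \<odot> C = dpow 0"
    using monic_inverse_exists[OF C(1)] by blast
  have ps: "is_psdo W0" "is_psdo C" "is_psdo Ci" using W0 C(1) Ci(1) by (simp_all add: monic_is_psdo)
  have "C \<odot> dpow 1 = dpow 1 \<odot> C"
    using commutes_dpow1_iff_const_coeffs[OF ps(2)] C(2) by simp
  note renormalise = renormalise_dressing[OF ps(1) V0(1) ps(2,3) V0(2,3) Ci(2,3) this C(3)]
  show ?thesis
    using monic_mult[OF W0 Ci(1)] renormalise is_psdo_mult[OF ps(2) V0(1)] unfolding L by blast
qed

lemma adj_conj_dpow1_imp_conj_dpow_minus1:
  assumes W: "is_psdo W" "is_psdo Winv" "W \<odot> Winv = dpow 0"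
    and conj: "psdo_adj W \<odot> (dpow 1 \<odot> W) = dpow 1"
  shows "(W \<odot> dpow (-1)) \<odot> psdo_adj W = dpow (-1)"
proof -
  have "dpow 1 \<odot> ((W \<odot> Winv) \<odot> dpow (-1)) = dpow 0"
    by (simp add: W(3) psdo_mult_one_left dpow_mult_dpow is_psdo_dpow)
  then have "psdo_adj W = psdo_adj W \<odot> (dpow 1 \<odot> ((W \<odot> Winv) \<odot> dpow (-1)))"
    using W by (simp add: psdo_mult_one_right is_psdo_closed)
  also have "\<dots> = (psdo_adj W \<odot> (dpow 1 \<odot> W)) \<odot> (Winv \<odot> dpow (-1))"
    using W(1,2) by (simp add: psdo_mult_assoc is_psdo_closed)
  finally have adjW: "psdo_adj W = dpow 1 \<odot> (Winv \<odot> dpow (-1))"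
    by (simp only: conj)
  have "(W \<odot> dpow (-1)) \<odot> psdo_adj W = (W \<odot> Winv) \<odot> dpow (-1)"
    unfolding adjW using W(1,2)
    by (simp add: psdo_mult_assoc dpow_mult_dpow_mult psdo_mult_one_left is_psdo_closed)
  then show ?thesis using W by (simp add: psdo_mult_one_left is_psdo_dpow)
qed

theorem mainTheorem14:
  fixes u :: "nat \<Rightarrow> real \<Rightarrow> real"
  assumes smooth_u: "\<forall>i\<ge>2. smooth (u i)"
    and adj: "psdo_adj (lax_op u)
              = (\<lambda>n x. - psdo_mult (dpow 1) (psdo_mult (lax_op u) (dpow (-1))) n x)"
  shows "\<exists>W Winv. is_psdo W \<and> is_psdo Winv \<and> W 0 = (\<lambda>_. 1) \<and> (\<forall>j>0. W j = (\<lambda>_. 0))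
           \<and> psdo_mult W Winv = dpow 0 \<and> psdo_mult Winv W = dpow 0
           \<and> lax_op u = psdo_mult (psdo_mult W (dpow 1)) Winv
           \<and> psdo_mult (psdo_mult W (dpow (-1))) (psdo_adj W) = dpow (-1)"
proof -
  define L where "L = lax_op u"
  have L: "ord_le L 1" "smooth_coeffs L" "L 1 = (\<lambda>_. 1)" "L 0 = (\<lambda>_. 0)"
    using smooth_u by (auto simp: L_def lax_op_def ord_le_def smooth_coeffs_def)
  obtain W0 V0 where W0: "monic W0" "is_psdo V0" "W0 \<odot> V0 = dpow 0" "V0 \<odot> W0 = dpow 0"
    "L = W0 \<odot> (dpow 1 \<odot> V0)"
    using dressing_conjugation_exists[OF L] by blast
  moreover have "psdo_adj L = psdo_neg (dpow 1 \<odot> (L \<odot> dpow (-1)))"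
    using adj by (simp add: L_def psdo_neg_def)
  ultimately obtain W Winv where "monic W" "is_psdo Winv" "W \<odot> Winv = dpow 0" "Winv \<odot> W = dpow 0"
    "L = W \<odot> (dpow 1 \<odot> Winv)" "psdo_adj W \<odot> (dpow 1 \<odot> W) = dpow 1"
    using normalised_dressing_exists by metis
  then show ?thesis
    using adj_conj_dpow1_imp_conj_dpow_minus1[OF monic_is_psdo]
    by (intro exI[of _ W] exI[of _ Winv])
      (auto simp: monic_def ord_le_def L_def psdo_mult_assoc monic_is_psdo is_psdo_dpow)
qed

end
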